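(* Let $R$ be a commutative ring with unit, let $G$ be a group, let $Z$ be a $G$-set, and let $\mathcal A=\bigoplus_{z\in Z}\mathcal A_z$ be an $R$-linear category with $G$-action $\alpha$ such that for every $g\in G$ and $z\in Z$, $\alpha_g$ restricts to an isomorphism $\alpha_g\colon\mathcal A_z\to\mathcal A_{gz}$. Then there is an equivalence of $R$-linear categories \[\mathcal A\rtimes G\simeq\bigoplus_{[z]\in G\backslash Z}\mathcal A_z\rtimes G_z,\] where $G_z$ denotes the stabilizer of $z$ (and $z$ runs over a set of representatives of the orbits).
   Context: An $R$-linear category is a category enriched over $R$-modules. $\bigoplus_{z}\mathcal A_z$ denotes the coproduct of $R$-linear categories: the disjoint union of the object sets, with zero morphisms between objects of different summands. A $G$-action is given by $R$-linear functors $\alpha_g$ with $\alpha_1=\mathrm{id}$, $\alpha_g\alpha_h=\alpha_{gh}$. The crossed product $\mathcal C\rtimes G$ has the objects of $\mathcal C$, morphisms $A\to B$ finite formal sums $\sum_g f_g g$ with $f_g\in\mathrm{Hom}(\alpha_g(A),B)$, and composition determined by $(fg)\circ(f'g')=(f\circ\alpha_g(f'))gg'$; $\mathcal A_z\rtimes G_z$ uses the restricted action of $G_z$ on $\mathcal A_z$. *)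

theory Defs
  imports "HOL-Algebra.Module" "HOL-Algebra.Group_Action" "HOL-Algebra.FiniteProduct"
begin

text \<open>Composition and identities carry their objects explicitly:
  cmp C A B D g f is g after f for f : A -> B, g : B -> D.\<close>

record ('o, 'r, 'm) lincat =
  ob   :: "'o set"
  homm :: "'o \<Rightarrow> 'o \<Rightarrow> ('r, 'm) module"
  cmp  :: "'o \<Rightarrow> 'o \<Rightarrow> 'o \<Rightarrow> 'm \<Rightarrow> 'm \<Rightarrow> 'm"
  ide  :: "'o \<Rightarrow> 'm"

definition lincat :: "('r, 'x) ring_scheme \<Rightarrow> ('o, 'r, 'm) lincat \<Rightarrow> bool" where
  "lincat R C \<longleftrightarrow> cring R \<and>
    (\<forall>A\<in>ob C. \<forall>B\<in>ob C. module R (homm C A B)) \<and>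
    (\<forall>A\<in>ob C. ide C A \<in> carrier (homm C A A)) \<and>
    (\<forall>A\<in>ob C. \<forall>B\<in>ob C. \<forall>D\<in>ob C. \<forall>f\<in>carrier (homm C A B). \<forall>g\<in>carrier (homm C B D).
        cmp C A B D g f \<in> carrier (homm C A D)) \<and>
    (\<forall>A\<in>ob C. \<forall>B\<in>ob C. \<forall>D\<in>ob C. \<forall>E\<in>ob C.
      \<forall>f\<in>carrier (homm C A B). \<forall>g\<in>carrier (homm C B D). \<forall>h\<in>carrier (homm C D E).
        cmp C A D E h (cmp C A B D g f) = cmp C A B E (cmp C B D E h g) f) \<and>
    (\<forall>A\<in>ob C. \<forall>B\<in>ob C. \<forall>f\<in>carrier (homm C A B).
        cmp C A B B (ide C B) f = f \<and> cmp C A A B f (ide C A) = f) \<and>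
    (\<forall>A\<in>ob C. \<forall>B\<in>ob C. \<forall>D\<in>ob C.
      \<forall>f\<in>carrier (homm C A B). \<forall>f'\<in>carrier (homm C A B).
      \<forall>g\<in>carrier (homm C B D). \<forall>g'\<in>carrier (homm C B D).
        cmp C A B D (add (homm C B D) g g') f = add (homm C A D) (cmp C A B D g f) (cmp C A B D g' f) \<and>
        cmp C A B D g (add (homm C A B) f f') = add (homm C A D) (cmp C A B D g f) (cmp C A B D g f') \<and>
        (\<forall>r\<in>carrier R.
          cmp C A B D (smult (homm C B D) r g) f = smult (homm C A D) r (cmp C A B D g f) \<and>
          cmp C A B D g (smult (homm C A B) r f) = smult (homm C A D) r (cmp C A B D g f)))"

record ('o1, 'm1, 'o2, 'm2) lfunctor =
  fo :: "'o1 \<Rightarrow> 'o2"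
  fm :: "'o1 \<Rightarrow> 'o1 \<Rightarrow> 'm1 \<Rightarrow> 'm2"

definition lin_functor ::
  "('r, 'x) ring_scheme \<Rightarrow> ('o1, 'r, 'm1) lincat \<Rightarrow> ('o2, 'r, 'm2) lincat
     \<Rightarrow> ('o1, 'm1, 'o2, 'm2) lfunctor \<Rightarrow> bool" where
  "lin_functor R C D F \<longleftrightarrow>
    (\<forall>A\<in>ob C. fo F A \<in> ob D) \<and>
    (\<forall>A\<in>ob C. \<forall>B\<in>ob C. \<forall>f\<in>carrier (homm C A B).
        fm F A B f \<in> carrier (homm D (fo F A) (fo F B))) \<and>
    (\<forall>A\<in>ob C. \<forall>B\<in>ob C. \<forall>E\<in>ob C. \<forall>f\<in>carrier (homm C A B). \<forall>g\<in>carrier (homm C B E).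
        fm F A E (cmp C A B E g f) = cmp D (fo F A) (fo F B) (fo F E) (fm F B E g) (fm F A B f)) \<and>
    (\<forall>A\<in>ob C. fm F A A (ide C A) = ide D (fo F A)) \<and>
    (\<forall>A\<in>ob C. \<forall>B\<in>ob C. \<forall>f\<in>carrier (homm C A B). \<forall>f'\<in>carrier (homm C A B).
        fm F A B (add (homm C A B) f f') = add (homm D (fo F A) (fo F B)) (fm F A B f) (fm F A B f') \<and>
        (\<forall>r\<in>carrier R. fm F A B (smult (homm C A B) r f) = smult (homm D (fo F A) (fo F B)) r (fm F A B f)))"

definition fid :: "('o, 'm, 'o, 'm) lfunctor" where
  "fid = \<lparr>fo = (\<lambda>A. A), fm = (\<lambda>A B f. f)\<rparr>"

definition fcomp :: "('o2, 'm2, 'o3, 'm3) lfunctor \<Rightarrow> ('o1, 'm1, 'o2, 'm2) lfunctor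
     \<Rightarrow> ('o1, 'm1, 'o3, 'm3) lfunctor" where
  "fcomp G F = \<lparr>fo = (\<lambda>A. fo G (fo F A)), fm = (\<lambda>A B f. fm G (fo F A) (fo F B) (fm F A B f))\<rparr>"

definition nat_iso ::
  "('o1, 'r, 'm1) lincat \<Rightarrow> ('o2, 'r, 'm2) lincat \<Rightarrow> ('o1, 'm1, 'o2, 'm2) lfunctor
     \<Rightarrow> ('o1, 'm1, 'o2, 'm2) lfunctor \<Rightarrow> ('o1 \<Rightarrow> 'm2) \<Rightarrow> bool" where
  "nat_iso C D F F' \<eta> \<longleftrightarrow>
    (\<forall>A\<in>ob C. \<eta> A \<in> carrier (homm D (fo F A) (fo F' A)) \<and>
       (\<exists>\<theta>\<in>carrier (homm D (fo F' A) (fo F A)).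
          cmp D (fo F A) (fo F' A) (fo F A) \<theta> (\<eta> A) = ide D (fo F A) \<and>
          cmp D (fo F' A) (fo F A) (fo F' A) (\<eta> A) \<theta> = ide D (fo F' A))) \<and>
    (\<forall>A\<in>ob C. \<forall>B\<in>ob C. \<forall>f\<in>carrier (homm C A B).
       cmp D (fo F A) (fo F' A) (fo F' B) (fm F' A B f) (\<eta> A) =
       cmp D (fo F A) (fo F B) (fo F' B) (\<eta> B) (fm F A B f))"

definition lincat_equiv ::
  "('r, 'x) ring_scheme \<Rightarrow> ('o1, 'r, 'm1) lincat \<Rightarrow> ('o2, 'r, 'm2) lincat \<Rightarrow> bool" where
  "lincat_equiv R C D \<longleftrightarrow> lincat R C \<and> lincat R D \<and>
    (\<exists>F G \<eta> \<epsilon>. lin_functor R C D F \<and> lin_functor R D C G \<and>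
       nat_iso C C fid (fcomp G F) \<eta> \<and> nat_iso D D fid (fcomp F G) \<epsilon>)"

definition lin_iso ::
  "('r, 'x) ring_scheme \<Rightarrow> ('o1, 'r, 'm1) lincat \<Rightarrow> ('o2, 'r, 'm2) lincat
     \<Rightarrow> ('o1, 'm1, 'o2, 'm2) lfunctor \<Rightarrow> bool" where
  "lin_iso R C D F \<longleftrightarrow> lin_functor R C D F \<and> bij_betw (fo F) (ob C) (ob D) \<and>
    (\<forall>A\<in>ob C. \<forall>B\<in>ob C. bij_betw (fm F A B) (carrier (homm C A B)) (carrier (homm D (fo F A) (fo F B))))"

definition lincat_action ::
  "('r, 'x) ring_scheme \<Rightarrow> ('g, 'y) monoid_scheme \<Rightarrow> ('o, 'r, 'm) lincat
     \<Rightarrow> ('g \<Rightarrow> ('o, 'm, 'o, 'm) lfunctor) \<Rightarrow> bool" where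
  "lincat_action R G C \<alpha> \<longleftrightarrow>
    (\<forall>g\<in>carrier G. lin_functor R C C (\<alpha> g)) \<and>
    (\<forall>A\<in>ob C. fo (\<alpha> \<one>\<^bsub>G\<^esub>) A = A) \<and>
    (\<forall>A\<in>ob C. \<forall>B\<in>ob C. \<forall>f\<in>carrier (homm C A B). fm (\<alpha> \<one>\<^bsub>G\<^esub>) A B f = f) \<and>
    (\<forall>g\<in>carrier G. \<forall>h\<in>carrier G. \<forall>A\<in>ob C. fo (\<alpha> (g \<otimes>\<^bsub>G\<^esub> h)) A = fo (\<alpha> g) (fo (\<alpha> h) A)) \<and>
    (\<forall>g\<in>carrier G. \<forall>h\<in>carrier G. \<forall>A\<in>ob C. \<forall>B\<in>ob C. \<forall>f\<in>carrier (homm C A B).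
        fm (\<alpha> (g \<otimes>\<^bsub>G\<^esub> h)) A B f = fm (\<alpha> g) (fo (\<alpha> h) A) (fo (\<alpha> h) B) (fm (\<alpha> h) A B f))"

text \<open>A morphism A -> B is a finitely supported function f on H with
  f g \<in> Hom(\<alpha>_g A, B), representing the formal sum \<Sum> f_g g; values outside H are undefined.\<close>

definition cross_hom ::
  "('g, 'y) monoid_scheme \<Rightarrow> 'g set \<Rightarrow> ('o, 'r, 'm) lincat \<Rightarrow> ('g \<Rightarrow> ('o, 'm, 'o, 'm) lfunctor)
     \<Rightarrow> 'o \<Rightarrow> 'o \<Rightarrow> ('r, 'g \<Rightarrow> 'm) module" where
  "cross_hom G H C \<alpha> A B =
    \<lparr>carrier = {f. (\<forall>g\<in>H. f g \<in> carrier (homm C (fo (\<alpha> g) A) B)) \<and>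
                  (\<forall>g. g \<notin> H \<longrightarrow> f g = undefined) \<and>
                  finite {g\<in>H. f g \<noteq> zero (homm C (fo (\<alpha> g) A) B)}},
     mult = (\<lambda>_ _. undefined), one = undefined,
     zero = (\<lambda>g. if g \<in> H then zero (homm C (fo (\<alpha> g) A) B) else undefined),
     add = (\<lambda>f f' g. if g \<in> H then add (homm C (fo (\<alpha> g) A) B) (f g) (f' g) else undefined),
     smult = (\<lambda>r f g. if g \<in> H then smult (homm C (fo (\<alpha> g) A) B) r (f g) else undefined)\<rparr>"

definition cross ::
  "('g, 'y) monoid_scheme \<Rightarrow> 'g set \<Rightarrow> ('o, 'r, 'm) lincat \<Rightarrow> ('g \<Rightarrow> ('o, 'm, 'o, 'm) lfunctor)
     \<Rightarrow> ('o, 'r, 'g \<Rightarrow> 'm) lincat" where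
  "cross G H C \<alpha> =
    \<lparr>ob = ob C,
     homm = cross_hom G H C \<alpha>,
     cmp = (\<lambda>A B D f' f k. if k \<in> H then
              finsum (homm C (fo (\<alpha> k) A) D)
                (\<lambda>g. cmp C (fo (\<alpha> k) A) (fo (\<alpha> g) B) D (f' g)
                        (fm (\<alpha> g) (fo (\<alpha> (inv\<^bsub>G\<^esub> g \<otimes>\<^bsub>G\<^esub> k)) A) B (f (inv\<^bsub>G\<^esub> g \<otimes>\<^bsub>G\<^esub> k))))
                {g\<in>H. f' g \<noteq> zero (homm C (fo (\<alpha> g) B) D)}
            else undefined),
     ide = (\<lambda>A g. if g = \<one>\<^bsub>G\<^esub> then ide C A
                  else if g \<in> H then zero (homm C (fo (\<alpha> g) A) A) else undefined)\<rparr>"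

definition zmod :: "('r, 'm) module" where
  "zmod = \<lparr>carrier = {undefined}, mult = (\<lambda>_ _. undefined), one = undefined,
           zero = undefined, add = (\<lambda>_ _. undefined), smult = (\<lambda>_ _. undefined)\<rparr>"

definition coprod :: "'i set \<Rightarrow> ('i \<Rightarrow> ('o, 'r, 'm) lincat) \<Rightarrow> ('i \<times> 'o, 'r, 'm) lincat" where
  "coprod I Cf =
    \<lparr>ob = Sigma I (\<lambda>i. ob (Cf i)),
     homm = (\<lambda>(i, a) (j, b). if i = j then homm (Cf i) a b else zmod),
     cmp = (\<lambda>(i, a) (j, b) (k, c) g f.
              if i = j \<and> j = k then cmp (Cf i) a b c g f
              else if i = k then zero (homm (Cf i) a c) else undefined),
     ide = (\<lambda>(i, a). ide (Cf i) a)\<rparr>"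

definition restr :: "('g \<Rightarrow> ('z \<times> 'o, 'm, 'z \<times> 'o, 'm) lfunctor) \<Rightarrow> 'z \<Rightarrow> 'g \<Rightarrow> ('o, 'm, 'o, 'm) lfunctor" where
  "restr \<alpha> z g = \<lparr>fo = (\<lambda>a. snd (fo (\<alpha> g) (z, a))), fm = (\<lambda>a b f. fm (\<alpha> g) (z, a) (z, b) f)\<rparr>"

end

theory Submission
  imports Defs
begin

text \<open>The inclusion J of the coproduct of the crossed products A_t \<rtimes> G_t, t ranging over the
  orbit representatives T, into A \<rtimes> G extends a morphism by zero off the stabiliser G_t. It is
  fully faithful: between objects lying over different representatives every hom-module of
  A \<rtimes> G is trivial, because g t = t' is impossible for t \<noteq> t' in T, and between objects over the
  same t only the components at g \<in> G_t can be nonzero. It is essentially surjective: the unit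
  1 g : (z, a) \<rightarrow> \<alpha>_g (z, a), with g moving z to its representative, is invertible with inverse
  1 g\<inverse>. Conjugating by these isomorphisms and lifting along J gives the quasi-inverse.\<close>

lemma (in abelian_group) idem_eq_zero: "x \<in> carrier G \<Longrightarrow> x \<oplus> x = x \<Longrightarrow> x = \<zero>"
  using add.l_cancel_one by blast

lemma (in abelian_group) a_inv_zero: "\<ominus> \<zero> = \<zero>"
  by simp

context abelian_monoid
begin

lemma finsum_mono_neutral_left:
  "finite B \<Longrightarrow> A \<subseteq> B \<Longrightarrow> (\<And>i. i \<in> B - A \<Longrightarrow> h i = \<zero>) \<Longrightarrow> (\<And>x. x \<in> A \<Longrightarrow> g x = h x)
   \<Longrightarrow> h \<in> B \<rightarrow> carrier G \<Longrightarrow> finsum G g A = finsum G h B"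
  by (rule add.finprod_mono_neutral_cong_left)

lemma finsum_zero_eqI: "(\<And>i. i \<in> A \<Longrightarrow> f i = \<zero>) \<Longrightarrow> finsum G f A = \<zero>"
  by (rule add.finprod_one_eqI)

lemma finsum_eq_single:
  assumes "finite A" "f \<in> A \<rightarrow> carrier G" "\<And>j. j \<in> A \<Longrightarrow> j \<noteq> i \<Longrightarrow> f j = \<zero>"
  shows "finsum G f A = (if i \<in> A then f i else \<zero>)"
proof (cases "i \<in> A")
  case True
  have "finsum G f {i} = finsum G f A"
    by (rule finsum_mono_neutral_left) (use assms True in auto)
  moreover have "finsum G f {i} = f i"
    using assms True by (simp add: finsum_insert[of "{}" i f, simplified] Pi_def)
  ultimately show ?thesis using True by simp
next
  case False
  then show ?thesis using assms by (auto intro: finsum_zero_eqI)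
qed

lemma finsum_swap:
  assumes "finite A" "finite B" "\<And>i j. i \<in> A \<Longrightarrow> j \<in> B \<Longrightarrow> f i j \<in> carrier G"
  shows "finsum G (\<lambda>i. finsum G (\<lambda>j. f i j) B) A = finsum G (\<lambda>j. finsum G (\<lambda>i. f i j) A) B"
  using assms
proof (induction A rule: finite_induct)
  case empty
  then show ?case by (simp add: finsum_zero_eqI)
next
  case (insert a A)
  have "finsum G (\<lambda>i. finsum G (\<lambda>j. f i j) B) (insert a A) = finsum G (f a) B \<oplus> finsum G (\<lambda>i.
      finsum G (\<lambda>j. f i j) B) A"
    using insert by (subst finsum_insert) (auto intro!: finsum_closed)
  also have "\<dots> = finsum G (f a) B \<oplus> finsum G (\<lambda>j. finsum G (\<lambda>i. f i j) A) B"
    using insert by simp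
  also have "\<dots> = finsum G (\<lambda>j. f a j \<oplus> finsum G (\<lambda>i. f i j) A) B"
    using insert by (subst finsum_addf) (auto intro!: finsum_closed)
  also have "\<dots> = finsum G (\<lambda>j. finsum G (\<lambda>i. f i j) (insert a A)) B"
    using insert by (intro finsum_cong') (auto intro!: finsum_closed)
  finally show ?case .
qed

end

lemma map_finsum:
  assumes M: "abelian_monoid M" and N: "abelian_monoid N" and "finite S" and f: "f \<in> S \<rightarrow> carrier M"
    and add: "\<And>x y. x \<in> carrier M \<Longrightarrow> y \<in> carrier M \<Longrightarrow> h (x \<oplus>\<^bsub>M\<^esub> y) = h x \<oplus>\<^bsub>N\<^esub> h y"
    and zero: "h \<zero>\<^bsub>M\<^esub> = \<zero>\<^bsub>N\<^esub>" and closed: "\<And>x. x \<in> carrier M \<Longrightarrow> h x \<in> carrier N"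
  shows "h (finsum M f S) = finsum N (\<lambda>i. h (f i)) S"
  using \<open>finite S\<close> f
proof (induction S rule: finite_induct)
  case empty
  show ?case by (simp add: abelian_monoid.finsum_empty[OF M] abelian_monoid.finsum_empty[OF N] zero)
next
  case (insert a S)
  then have fa: "f a \<in> carrier M" and fS: "f \<in> S \<rightarrow> carrier M" by auto
  have "h (finsum M f (insert a S)) = h (f a \<oplus>\<^bsub>M\<^esub> finsum M f S)"
    using abelian_monoid.finsum_insert[OF M insert(1,2) fS fa] by simp
  also have "\<dots> = h (f a) \<oplus>\<^bsub>N\<^esub> finsum N (\<lambda>i. h (f i)) S"
    using add fa abelian_monoid.finsum_closed[OF M fS] insert fS by simp
  also have "\<dots> = finsum N (\<lambda>i. h (f i)) (insert a S)"
    using abelian_monoid.finsum_insert[OF N insert(1,2), of "\<lambda>i. h (f i)"] fS fa closed by (auto simp: Pi_def)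
  finally show ?case .
qed

lemma module_smult_finsum:
  assumes "module R M" "a \<in> carrier R" "finite S" "u \<in> S \<rightarrow> carrier M"
  shows "smult M a (finsum M u S) = finsum M (\<lambda>i. smult M a (u i)) S"
proof -
  have am: "abelian_monoid M" by (rule abelian_group.axioms(1)[OF module.axioms(2)[OF assms(1)]])
  show ?thesis
    by (rule map_finsum[OF am am assms(3,4)])
       (use assms in \<open>auto simp: module.smult_r_distr module.smult_r_null module.smult_closed\<close>)
qed

section \<open>Linear categories and linear functors\<close>

lemma lincat_cring: "lincat R C \<Longrightarrow> cring R"
  by (simp add: lincat_def)

lemma lincat_hom_module: "lincat R C \<Longrightarrow> A \<in> ob C \<Longrightarrow> B \<in> ob C \<Longrightarrow> module R (homm C A B)"
  by (simp add: lincat_def)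

lemma lincat_hom_abelian_group: "lincat R C \<Longrightarrow> A \<in> ob C \<Longrightarrow> B \<in> ob C \<Longrightarrow> abelian_group (homm C A B)"
  by (rule module.axioms(2)[OF lincat_hom_module])

lemma lincat_hom_abelian_monoid: "lincat R C \<Longrightarrow> A \<in> ob C \<Longrightarrow> B \<in> ob C \<Longrightarrow> abelian_monoid (homm C A B)"
  by (rule abelian_group.axioms(1)[OF lincat_hom_abelian_group])

lemma lincat_zero_closed: "lincat R C \<Longrightarrow> A \<in> ob C \<Longrightarrow> B \<in> ob C \<Longrightarrow> zero (homm C A B) \<in> carrier (homm C A B)"
  by (rule abelian_monoid.zero_closed[OF lincat_hom_abelian_monoid])

lemma lincat_ide_closed: "lincat R C \<Longrightarrow> A \<in> ob C \<Longrightarrow> ide C A \<in> carrier (homm C A A)"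
  by (simp add: lincat_def)

lemma lincat_cmp_closed: "lincat R C \<Longrightarrow> A \<in> ob C \<Longrightarrow> B \<in> ob C \<Longrightarrow> D \<in> ob C \<Longrightarrow> f \<in> carrier (homm C A B)
   \<Longrightarrow> g \<in> carrier (homm C B D) \<Longrightarrow> cmp C A B D g f \<in> carrier (homm C A D)"
  by (simp add: lincat_def)

lemma lincat_cmp_assoc: "lincat R C \<Longrightarrow> A \<in> ob C \<Longrightarrow> B \<in> ob C \<Longrightarrow> D \<in> ob C \<Longrightarrow> E \<in> ob C
   \<Longrightarrow> f \<in> carrier (homm C A B) \<Longrightarrow> g \<in> carrier (homm C B D) \<Longrightarrow> h \<in> carrier (homm C D E)
   \<Longrightarrow> cmp C A D E h (cmp C A B D g f) = cmp C A B E (cmp C B D E h g) f"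
  by (simp add: lincat_def)

lemma lincat_ide_left: "lincat R C \<Longrightarrow> A \<in> ob C \<Longrightarrow> B \<in> ob C \<Longrightarrow> f \<in> carrier (homm C A B)
   \<Longrightarrow> cmp C A B B (ide C B) f = f"
  by (simp add: lincat_def)

lemma lincat_ide_right: "lincat R C \<Longrightarrow> A \<in> ob C \<Longrightarrow> B \<in> ob C \<Longrightarrow> f \<in> carrier (homm C A B)
   \<Longrightarrow> cmp C A A B f (ide C A) = f"
  by (simp add: lincat_def)

lemma lincat_cmp_add_left: "lincat R C \<Longrightarrow> A \<in> ob C \<Longrightarrow> B \<in> ob C \<Longrightarrow> D \<in> ob C \<Longrightarrow> f \<in> carrier (homm C A B)
   \<Longrightarrow> g \<in> carrier (homm C B D) \<Longrightarrow> g' \<in> carrier (homm C B D)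
   \<Longrightarrow> cmp C A B D (add (homm C B D) g g') f = add (homm C A D) (cmp C A B D g f) (cmp C A B D g' f)"
  by (simp add: lincat_def)

lemma lincat_cmp_add_right: "lincat R C \<Longrightarrow> A \<in> ob C \<Longrightarrow> B \<in> ob C \<Longrightarrow> D \<in> ob C \<Longrightarrow> f \<in> carrier (homm C A B)
   \<Longrightarrow> f' \<in> carrier (homm C A B) \<Longrightarrow> g \<in> carrier (homm C B D)
   \<Longrightarrow> cmp C A B D g (add (homm C A B) f f') = add (homm C A D) (cmp C A B D g f) (cmp C A B D g f')"
  by (simp add: lincat_def)

lemma lincat_cmp_smult_left: "lincat R C \<Longrightarrow> A \<in> ob C \<Longrightarrow> B \<in> ob C \<Longrightarrow> D \<in> ob C \<Longrightarrow> f \<in> carrier (homm C A B)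
   \<Longrightarrow> g \<in> carrier (homm C B D) \<Longrightarrow> r \<in> carrier R
   \<Longrightarrow> cmp C A B D (smult (homm C B D) r g) f = smult (homm C A D) r (cmp C A B D g f)"
  by (simp add: lincat_def)

lemma lincat_cmp_smult_right: "lincat R C \<Longrightarrow> A \<in> ob C \<Longrightarrow> B \<in> ob C \<Longrightarrow> D \<in> ob C \<Longrightarrow> f \<in> carrier (homm C A B)
   \<Longrightarrow> g \<in> carrier (homm C B D) \<Longrightarrow> r \<in> carrier R
   \<Longrightarrow> cmp C A B D g (smult (homm C A B) r f) = smult (homm C A D) r (cmp C A B D g f)"
  by (simp add: lincat_def)

lemma lincat_cmp_zero_left:
  assumes "lincat R C" "A \<in> ob C" "B \<in> ob C" "D \<in> ob C" "f \<in> carrier (homm C A B)"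
  shows "cmp C A B D (zero (homm C B D)) f = zero (homm C A D)"
proof -
  let ?x = "cmp C A B D (zero (homm C B D)) f"
  have z: "zero (homm C B D) \<in> carrier (homm C B D)" by (rule lincat_zero_closed[OF assms(1,3,4)])
  have "?x = cmp C A B D (add (homm C B D) (zero (homm C B D)) (zero (homm C B D))) f"
    using abelian_monoid.l_zero[OF lincat_hom_abelian_monoid[OF assms(1,3,4)] z] by simp
  also have "\<dots> = add (homm C A D) ?x ?x" by (rule lincat_cmp_add_left[OF assms(1-5) z z])
  finally show ?thesis
    using abelian_group.idem_eq_zero[OF lincat_hom_abelian_group[OF assms(1,2,4)]
        lincat_cmp_closed[OF assms(1-5) z]]
    by simp
qed

lemma lincat_cmp_zero_right:
  assumes "lincat R C" "A \<in> ob C" "B \<in> ob C" "D \<in> ob C" "g \<in> carrier (homm C B D)"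
  shows "cmp C A B D g (zero (homm C A B)) = zero (homm C A D)"
proof -
  let ?x = "cmp C A B D g (zero (homm C A B))"
  have z: "zero (homm C A B) \<in> carrier (homm C A B)" by (rule lincat_zero_closed[OF assms(1,2,3)])
  have "?x = cmp C A B D g (add (homm C A B) (zero (homm C A B)) (zero (homm C A B)))"
    using abelian_monoid.l_zero[OF lincat_hom_abelian_monoid[OF assms(1,2,3)] z] by simp
  also have "\<dots> = add (homm C A D) ?x ?x" by (rule lincat_cmp_add_right[OF assms(1-4) z z assms(5)])
  finally show ?thesis
    using abelian_group.idem_eq_zero[OF lincat_hom_abelian_group[OF assms(1,2,4)]
        lincat_cmp_closed[OF assms(1-4) z assms(5)]]
    by simp
qed

lemma lincat_cmp_finsum_left:
  assumes "lincat R C" "A \<in> ob C" "B \<in> ob C" "D \<in> ob C" "f \<in> carrier (homm C A B)"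
    "finite S" "u \<in> S \<rightarrow> carrier (homm C B D)"
  shows "cmp C A B D (finsum (homm C B D) u S) f = finsum (homm C A D) (\<lambda>i. cmp C A B D (u i) f) S"
  by (rule map_finsum[OF lincat_hom_abelian_monoid[OF assms(1,3,4)] lincat_hom_abelian_monoid[OF
      assms(1,2,4)] assms(6,7)])
     (use assms in \<open>auto intro: lincat_cmp_add_left lincat_cmp_zero_left lincat_cmp_closed\<close>)

lemma lincat_cmp_finsum_right:
  assumes "lincat R C" "A \<in> ob C" "B \<in> ob C" "D \<in> ob C" "g \<in> carrier (homm C B D)"
    "finite S" "u \<in> S \<rightarrow> carrier (homm C A B)"
  shows "cmp C A B D g (finsum (homm C A B) u S) = finsum (homm C A D) (\<lambda>i. cmp C A B D g (u i)) S"
  by (rule map_finsum[OF lincat_hom_abelian_monoid[OF assms(1,2,3)] lincat_hom_abelian_monoid[OF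
      assms(1,2,4)] assms(6,7)])
     (use assms in \<open>auto intro: lincat_cmp_add_right lincat_cmp_zero_right lincat_cmp_closed\<close>)

lemma lin_functor_ob: "lin_functor R C D F \<Longrightarrow> A \<in> ob C \<Longrightarrow> fo F A \<in> ob D"
  by (simp add: lin_functor_def)

lemma lin_functor_hom: "lin_functor R C D F \<Longrightarrow> A \<in> ob C \<Longrightarrow> B \<in> ob C \<Longrightarrow> f \<in> carrier (homm C A B)
   \<Longrightarrow> fm F A B f \<in> carrier (homm D (fo F A) (fo F B))"
  by (simp add: lin_functor_def)

lemma lin_functor_cmp: "lin_functor R C D F \<Longrightarrow> A \<in> ob C \<Longrightarrow> B \<in> ob C \<Longrightarrow> E \<in> ob C
   \<Longrightarrow> f \<in> carrier (homm C A B) \<Longrightarrow> g \<in> carrier (homm C B E)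
   \<Longrightarrow> fm F A E (cmp C A B E g f) = cmp D (fo F A) (fo F B) (fo F E) (fm F B E g) (fm F A B f)"
  by (simp add: lin_functor_def)

lemma lin_functor_ide: "lin_functor R C D F \<Longrightarrow> A \<in> ob C \<Longrightarrow> fm F A A (ide C A) = ide D (fo F A)"
  by (simp add: lin_functor_def)

lemma lin_functor_add: "lin_functor R C D F \<Longrightarrow> A \<in> ob C \<Longrightarrow> B \<in> ob C \<Longrightarrow> f \<in> carrier (homm C A B)
   \<Longrightarrow> f' \<in> carrier (homm C A B)
   \<Longrightarrow> fm F A B (add (homm C A B) f f') = add (homm D (fo F A) (fo F B)) (fm F A B f) (fm F A B f')"
  by (simp add: lin_functor_def)

lemma lin_functor_smult: "lin_functor R C D F \<Longrightarrow> A \<in> ob C \<Longrightarrow> B \<in> ob C \<Longrightarrow> f \<in> carrier (homm C A B)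
   \<Longrightarrow> r \<in> carrier R
   \<Longrightarrow> fm F A B (smult (homm C A B) r f) = smult (homm D (fo F A) (fo F B)) r (fm F A B f)"
  by (simp add: lin_functor_def)

lemma lin_functor_zero:
  assumes "lincat R C" "lincat R D" "lin_functor R C D F" "A \<in> ob C" "B \<in> ob C"
  shows "fm F A B (zero (homm C A B)) = zero (homm D (fo F A) (fo F B))"
proof -
  let ?x = "fm F A B (zero (homm C A B))"
  have z: "zero (homm C A B) \<in> carrier (homm C A B)" by (rule lincat_zero_closed[OF assms(1,4,5)])
  have "?x = fm F A B (add (homm C A B) (zero (homm C A B)) (zero (homm C A B)))"
    using abelian_monoid.l_zero[OF lincat_hom_abelian_monoid[OF assms(1,4,5)] z] by simp
  also have "\<dots> = add (homm D (fo F A) (fo F B)) ?x ?x" by (rule lin_functor_add[OF assms(3-5) z z])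
  finally show ?thesis
    using abelian_group.idem_eq_zero[OF lincat_hom_abelian_group[OF assms(2) lin_functor_ob[OF
        assms(3,4)] lin_functor_ob[OF assms(3,5)]] lin_functor_hom[OF assms(3-5) z]]
    by simp
qed

lemma lin_functor_finsum:
  assumes "lincat R C" "lincat R D" "lin_functor R C D F" "A \<in> ob C" "B \<in> ob C"
    "finite S" "u \<in> S \<rightarrow> carrier (homm C A B)"
  shows "fm F A B (finsum (homm C A B) u S) = finsum (homm D (fo F A) (fo F B)) (\<lambda>i. fm F A B (u i)) S"
  by (rule map_finsum[OF lincat_hom_abelian_monoid[OF assms(1,4,5)]
        lincat_hom_abelian_monoid[OF assms(2) lin_functor_ob[OF assms(3,4)] lin_functor_ob[OF
            assms(3,5)]] assms(6,7)])
     (use assms in \<open>auto intro: lin_functor_add lin_functor_zero lin_functor_hom\<close>)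

section \<open>Crossed products\<close>

definition cross_supp :: "'g set \<Rightarrow> ('o, 'r, 'm) lincat \<Rightarrow> ('g \<Rightarrow> ('o, 'm, 'o, 'm) lfunctor)
   \<Rightarrow> 'o \<Rightarrow> 'o \<Rightarrow> ('g \<Rightarrow> 'm) \<Rightarrow> 'g set" where
  "cross_supp H C \<alpha> A B f = {g\<in>H. f g \<noteq> zero (homm C (fo (\<alpha> g) A) B)}"

text \<open>The summand indexed by g of the component at k of a composite: (f'_g g) (f_h h) =
  (f'_g \<alpha>_g(f_h)) (g h) with h = g\<inverse> k.\<close>

definition cross_term :: "('g, 'y) monoid_scheme \<Rightarrow> ('o, 'r, 'm) lincat \<Rightarrow> ('g \<Rightarrow> ('o, 'm, 'o, 'm) lfunctor)
   \<Rightarrow> 'o \<Rightarrow> 'o \<Rightarrow> 'o \<Rightarrow> ('g \<Rightarrow> 'm) \<Rightarrow> ('g \<Rightarrow> 'm) \<Rightarrow> 'g \<Rightarrow> 'g \<Rightarrow> 'm" where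
  "cross_term G C \<alpha> A B D f' f k g = cmp C (fo (\<alpha> k) A) (fo (\<alpha> g) B) D (f' g)
      (fm (\<alpha> g) (fo (\<alpha> (inv\<^bsub>G\<^esub> g \<otimes>\<^bsub>G\<^esub> k)) A) B (f (inv\<^bsub>G\<^esub> g \<otimes>\<^bsub>G\<^esub> k)))"

text \<open>The morphism u h of the crossed product, a formal sum with the single term u at h.\<close>

definition cross_single :: "'g set \<Rightarrow> ('o, 'r, 'm) lincat \<Rightarrow> ('g \<Rightarrow> ('o, 'm, 'o, 'm) lfunctor)
   \<Rightarrow> 'o \<Rightarrow> 'o \<Rightarrow> 'g \<Rightarrow> 'm \<Rightarrow> ('g \<Rightarrow> 'm)" where
  "cross_single H C \<alpha> A B h u =
     (\<lambda>k. if k = h then u else if k \<in> H then zero (homm C (fo (\<alpha> k) A) B) else undefined)"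

lemma cross_simps:
  "ob (cross G H C \<alpha>) = ob C"
  "homm (cross G H C \<alpha>) A B = cross_hom G H C \<alpha> A B"
  "k \<in> H \<Longrightarrow> cmp (cross G H C \<alpha>) A B D f' f k =
     finsum (homm C (fo (\<alpha> k) A) D) (cross_term G C \<alpha> A B D f' f k) (cross_supp H C \<alpha> B D f')"
  "k \<notin> H \<Longrightarrow> cmp (cross G H C \<alpha>) A B D f' f k = undefined"
  "ide (cross G H C \<alpha>) A =
     (\<lambda>g. if g = \<one>\<^bsub>G\<^esub> then ide C A else if g \<in> H then zero (homm C (fo (\<alpha> g) A) A) else undefined)"
  by (simp_all add: cross_def cross_supp_def cross_term_def[abs_def])

lemma cross_hom_simps:
  "f \<in> carrier (cross_hom G H C \<alpha> A B) \<longleftrightarrow> (\<forall>g\<in>H. f g \<in> carrier (homm C (fo (\<alpha> g) A) B)) \<and>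
     (\<forall>g. g \<notin> H \<longrightarrow> f g = undefined) \<and> finite (cross_supp H C \<alpha> A B f)"
  "zero (cross_hom G H C \<alpha> A B) = (\<lambda>g. if g \<in> H then zero (homm C (fo (\<alpha> g) A) B) else undefined)"
  "add (cross_hom G H C \<alpha> A B) f f' =
     (\<lambda>g. if g \<in> H then add (homm C (fo (\<alpha> g) A) B) (f g) (f' g) else undefined)"
  "smult (cross_hom G H C \<alpha> A B) r f =
     (\<lambda>g. if g \<in> H then smult (homm C (fo (\<alpha> g) A) B) r (f g) else undefined)"
  by (simp_all add: cross_hom_def cross_supp_def)

locale cross_setting = group G + H: subgroup H G
  for G :: "('g, 'y) monoid_scheme" (structure) and H :: "'g set" +
  fixes R :: "('r, 'x) ring_scheme" and C :: "('o, 'r, 'm) lincat"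
    and \<alpha> :: "'g \<Rightarrow> ('o, 'm, 'o, 'm) lfunctor"
  assumes lincat_C: "lincat R C"
    and act_functor: "\<And>g. g \<in> H \<Longrightarrow> lin_functor R C C (\<alpha> g)"
    and act_one_ob: "\<And>A. A \<in> ob C \<Longrightarrow> fo (\<alpha> \<one>) A = A"
    and act_one_hom: "\<And>A B f. A \<in> ob C \<Longrightarrow> B \<in> ob C \<Longrightarrow> f \<in> carrier (homm C A B) \<Longrightarrow> fm (\<alpha> \<one>) A B f = f"
    and act_mult_ob: "\<And>g h A. g \<in> H \<Longrightarrow> h \<in> H \<Longrightarrow> A \<in> ob C \<Longrightarrow> fo (\<alpha> (g \<otimes> h)) A = fo (\<alpha> g) (fo (\<alpha> h) A)"
    and act_mult_hom: "\<And>g h A B f. g \<in> H \<Longrightarrow> h \<in> H \<Longrightarrow> A \<in> ob C \<Longrightarrow> B \<in> ob C \<Longrightarrow> f \<in> carrier (homm C A B) \<Longrightarrow>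
        fm (\<alpha> (g \<otimes> h)) A B f = fm (\<alpha> g) (fo (\<alpha> h) A) (fo (\<alpha> h) B) (fm (\<alpha> h) A B f)"
begin

abbreviation "act g A \<equiv> fo (\<alpha> g) A"
abbreviation "Hom A B \<equiv> homm C A B"
abbreviation "XHom A B \<equiv> cross_hom G H C \<alpha> A B"
abbreviation "XCat \<equiv> cross G H C \<alpha>"
abbreviation "supp A B f \<equiv> cross_supp H C \<alpha> A B f"

lemma H_in_carrier: "g \<in> H \<Longrightarrow> g \<in> carrier G"
  using H.subset by blast

lemma H_inv_mult_closed: "g \<in> H \<Longrightarrow> k \<in> H \<Longrightarrow> inv g \<otimes> k \<in> H"
  by simp

lemma mult_inv_mult_cancel: "g \<in> H \<Longrightarrow> k \<in> H \<Longrightarrow> g \<otimes> (inv g \<otimes> k) = k"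
  by (simp add: H_in_carrier m_assoc[symmetric])

lemma inv_mult_mult_cancel: "g \<in> H \<Longrightarrow> k \<in> H \<Longrightarrow> inv g \<otimes> (g \<otimes> k) = k"
  by (simp add: H_in_carrier m_assoc[symmetric])

lemma inv_mult_inv_mult: "g \<in> H \<Longrightarrow> n \<in> H \<Longrightarrow> k \<in> H \<Longrightarrow> inv (g \<otimes> n) \<otimes> k = inv n \<otimes> (inv g \<otimes> k)"
  by (simp add: H_in_carrier inv_mult_group m_assoc)

lemma act_ob: "g \<in> H \<Longrightarrow> A \<in> ob C \<Longrightarrow> act g A \<in> ob C"
  by (rule lin_functor_ob[OF act_functor])

lemma act_act_inv_mult: "g \<in> H \<Longrightarrow> k \<in> H \<Longrightarrow> A \<in> ob C \<Longrightarrow> act g (act (inv g \<otimes> k) A) = act k A"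
  using act_mult_ob[of g "inv g \<otimes> k" A] H_inv_mult_closed mult_inv_mult_cancel by simp

lemma act_hom_module: "g \<in> H \<Longrightarrow> A \<in> ob C \<Longrightarrow> B \<in> ob C \<Longrightarrow> module R (Hom (act g A) B)"
  by (rule lincat_hom_module[OF lincat_C act_ob])

lemma act_hom_abelian_group: "g \<in> H \<Longrightarrow> A \<in> ob C \<Longrightarrow> B \<in> ob C \<Longrightarrow> abelian_group (Hom (act g A) B)"
  by (rule lincat_hom_abelian_group[OF lincat_C act_ob])

lemma act_hom_abelian_monoid: "g \<in> H \<Longrightarrow> A \<in> ob C \<Longrightarrow> B \<in> ob C \<Longrightarrow> abelian_monoid (Hom (act g A) B)"
  by (rule lincat_hom_abelian_monoid[OF lincat_C act_ob])

lemma cross_hom_eqI: "(\<And>g. g \<in> H \<Longrightarrow> f g = f' g) \<Longrightarrow> (\<And>g. g \<notin> H \<Longrightarrow> f g = undefined) \<Longrightarrow> (\<And>g. g \<notin> H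
    \<Longrightarrow> f' g = undefined) \<Longrightarrow> f = f'"
  by (rule ext) (case_tac "x \<in> H", simp_all)

lemma cross_hom_in: "f \<in> carrier (XHom A B) \<Longrightarrow> g \<in> H \<Longrightarrow> f g \<in> carrier (Hom (act g A) B)"
  by (simp add: cross_hom_simps)

lemma cross_hom_out: "f \<in> carrier (XHom A B) \<Longrightarrow> g \<notin> H \<Longrightarrow> f g = undefined"
  by (simp add: cross_hom_simps)

lemma finite_supp: "f \<in> carrier (XHom A B) \<Longrightarrow> finite (supp A B f)"
  by (simp add: cross_hom_simps)

lemma cross_homI: "(\<And>g. g \<in> H \<Longrightarrow> f g \<in> carrier (Hom (act g A) B)) \<Longrightarrow> (\<And>g. g \<notin> H \<Longrightarrow> f g = undefined)
   \<Longrightarrow> finite (supp A B f) \<Longrightarrow> f \<in> carrier (XHom A B)"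
  by (simp add: cross_hom_simps)

lemma supp_in_H: "g \<in> supp A B f \<Longrightarrow> g \<in> H"
  by (simp add: cross_supp_def)

lemma not_in_supp: "g \<in> H \<Longrightarrow> g \<notin> supp A B f \<Longrightarrow> f g = zero (Hom (act g A) B)"
  by (auto simp: cross_supp_def)

lemma supp_subsetI: "(\<And>g. g \<in> H \<Longrightarrow> g \<notin> S \<Longrightarrow> f g = zero (Hom (act g A) B)) \<Longrightarrow> supp A B f \<subseteq> S"
  by (auto simp: cross_supp_def)

lemma finite_suppI: "finite S \<Longrightarrow> (\<And>g. g \<in> H \<Longrightarrow> g \<notin> S \<Longrightarrow> f g = zero (Hom (act g A) B)) \<Longrightarrow> finite (supp A B f)"
  by (rule finite_subset[OF supp_subsetI])

lemma supp_add_subset: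
  "A \<in> ob C \<Longrightarrow> B \<in> ob C \<Longrightarrow> supp A B (add (XHom A B) f f') \<subseteq> supp A B f \<union> supp A B f'"
  by (rule supp_subsetI) (simp add: not_in_supp[where f=f and A=A and B=B] not_in_supp[where f=f'
      and A=A and B=B] cross_hom_simps(3)
      abelian_monoid.l_zero[OF act_hom_abelian_monoid] lincat_zero_closed[OF lincat_C act_ob])

lemma supp_smult_subset:
  "A \<in> ob C \<Longrightarrow> B \<in> ob C \<Longrightarrow> r \<in> carrier R \<Longrightarrow> supp A B (smult (XHom A B) r f) \<subseteq> supp A B f"
  by (rule supp_subsetI) (simp add: not_in_supp[where f=f and A=A
      and B=B] cross_hom_simps(4) module.smult_r_null[OF act_hom_module])

lemma cross_hom_zero_closed: "A \<in> ob C \<Longrightarrow> B \<in> ob C \<Longrightarrow> zero (XHom A B) \<in> carrier (XHom A B)"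
  by (rule cross_homI) (auto simp: cross_hom_simps lincat_zero_closed[OF lincat_C act_ob]
      intro: finite_suppI[of "{}"])

lemma cross_hom_add_closed: assumes "A \<in> ob C" "B \<in> ob C" "f \<in> carrier (XHom A B)" "f' \<in> carrier (XHom A B)"
  shows "add (XHom A B) f f' \<in> carrier (XHom A B)"
proof (rule cross_homI)
  show "\<And>g. g \<in> H \<Longrightarrow> add (XHom A B) f f' g \<in> carrier (Hom (act g A) B)"
    using assms by (simp add: cross_hom_simps(3) abelian_monoid.a_closed[OF act_hom_abelian_monoid] cross_hom_in)
  show "\<And>g. g \<notin> H \<Longrightarrow> add (XHom A B) f f' g = undefined" by (simp add: cross_hom_simps(3))
  show "finite (supp A B (add (XHom A B) f f'))"
    by (rule finite_subset[OF supp_add_subset[OF assms(1,2)]]) (simp add: finite_supp assms(3,4))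
qed

lemma cross_hom_smult_closed: assumes "A \<in> ob C" "B \<in> ob C" "f \<in> carrier (XHom A B)" "r \<in> carrier R"
  shows "smult (XHom A B) r f \<in> carrier (XHom A B)"
proof (rule cross_homI)
  show "\<And>g. g \<in> H \<Longrightarrow> smult (XHom A B) r f g \<in> carrier (Hom (act g A) B)"
    using assms by (simp add: cross_hom_simps(4) module.smult_closed[OF act_hom_module] cross_hom_in)
  show "\<And>g. g \<notin> H \<Longrightarrow> smult (XHom A B) r f g = undefined" by (simp add: cross_hom_simps(4))
  show "finite (supp A B (smult (XHom A B) r f))"
    by (rule finite_subset[OF supp_smult_subset[OF assms(1,2,4)]]) (simp add: finite_supp assms(3))
qed

lemma cross_hom_abelian_group:
  assumes "A \<in> ob C" "B \<in> ob C" shows "abelian_group (XHom A B)"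
proof (rule abelian_groupI)
  fix x y z assume x: "x \<in> carrier (XHom A B)" and y: "y \<in> carrier (XHom A B)" and z: "z \<in> carrier (XHom A B)"
  show "add (XHom A B) x y \<in> carrier (XHom A B)" by (rule cross_hom_add_closed[OF assms x y])
  show "add (XHom A B) (add (XHom A B) x y) z = add (XHom A B) x (add (XHom A B) y z)"
    using x y z assms by (intro cross_hom_eqI) (auto simp: cross_hom_simps abelian_monoid.a_assoc[OF
        act_hom_abelian_monoid] cross_hom_in)
  show "add (XHom A B) x y = add (XHom A B) y x"
    using x y assms by (intro cross_hom_eqI) (auto simp: cross_hom_simps abelian_monoid.a_comm[OF
        act_hom_abelian_monoid] cross_hom_in)
  show "add (XHom A B) (zero (XHom A B)) x = x"
    using x assms by (intro cross_hom_eqI) (auto simp: cross_hom_simps abelian_monoid.l_zero[OF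
        act_hom_abelian_monoid] cross_hom_in)
  show "\<exists>y\<in>carrier (XHom A B). add (XHom A B) y x = zero (XHom A B)"
  proof (intro bexI)
    let ?y = "\<lambda>g. if g \<in> H then a_inv (Hom (act g A) B) (x g) else undefined"
    show "add (XHom A B) ?y x = zero (XHom A B)"
      using x assms by (intro cross_hom_eqI) (auto simp: cross_hom_simps abelian_group.l_neg[OF
          act_hom_abelian_group] cross_hom_in)
    show "?y \<in> carrier (XHom A B)"
    proof (rule cross_homI)
      show "finite (supp A B ?y)"
        by (rule finite_suppI[OF finite_supp[OF x]])
           (simp add: not_in_supp abelian_group.a_inv_zero[OF act_hom_abelian_group] assms)
    qed (simp_all add: abelian_group.a_inv_closed[OF act_hom_abelian_group] cross_hom_in[OF x] assms)
  qed
qed (rule cross_hom_zero_closed[OF assms])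

lemma cross_hom_module: assumes "A \<in> ob C" "B \<in> ob C" shows "module R (XHom A B)"
proof (rule moduleI)
  show "cring R" by (rule lincat_cring[OF lincat_C])
  show "abelian_group (XHom A B)" by (rule cross_hom_abelian_group[OF assms])
next
  fix a x assume a: "a \<in> carrier R" and x: "x \<in> carrier (XHom A B)"
  show "smult (XHom A B) a x \<in> carrier (XHom A B)" by (rule cross_hom_smult_closed[OF assms x a])
next
  fix a b x assume a: "a \<in> carrier R" and b: "b \<in> carrier R" and x: "x \<in> carrier (XHom A B)"
  show "smult (XHom A B) (add R a b) x = add (XHom A B) (smult (XHom A B) a x) (smult (XHom A B) b x)"
    using x a b assms by (intro cross_hom_eqI) (auto simp: cross_hom_simps module.smult_l_distr[OF
        act_hom_module] cross_hom_in)
next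
  fix a x y assume a: "a \<in> carrier R" and x: "x \<in> carrier (XHom A B)" and y: "y \<in> carrier (XHom A B)"
  show "smult (XHom A B) a (add (XHom A B) x y) = add (XHom A B) (smult (XHom A B) a x) (smult (XHom A B) a y)"
    using x y a assms by (intro cross_hom_eqI) (auto simp: cross_hom_simps module.smult_r_distr[OF
        act_hom_module] cross_hom_in)
next
  fix a b x assume a: "a \<in> carrier R" and b: "b \<in> carrier R" and x: "x \<in> carrier (XHom A B)"
  show "smult (XHom A B) (mult R a b) x = smult (XHom A B) a (smult (XHom A B) b x)"
    using x a b assms by (intro cross_hom_eqI) (auto simp: cross_hom_simps module.smult_assoc1[OF
        act_hom_module] cross_hom_in)
next
  fix x assume x: "x \<in> carrier (XHom A B)"
  show "smult (XHom A B) (one R) x = x"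
    using x assms by (intro cross_hom_eqI) (auto simp: cross_hom_simps module.smult_one[OF
        act_hom_module] cross_hom_in)
qed

lemma term_closed:
  assumes A: "A \<in> ob C" and B: "B \<in> ob C" and D: "D \<in> ob C"
    and f': "f' \<in> carrier (XHom B D)" and f: "f \<in> carrier (XHom A B)" and k: "k \<in> H" and g: "g \<in> H"
  shows "cross_term G C \<alpha> A B D f' f k g \<in> carrier (Hom (act k A) D)"
proof -
  let ?h = "inv g \<otimes> k"
  have h: "?h \<in> H" by (rule H_inv_mult_closed[OF g k])
  have 1: "f ?h \<in> carrier (Hom (act ?h A) B)" by (rule cross_hom_in[OF f h])
  have 2: "fm (\<alpha> g) (act ?h A) B (f ?h) \<in> carrier (Hom (act k A) (act g B))"
    using lin_functor_hom[OF act_functor[OF g] act_ob[OF h A] B 1] act_act_inv_mult[OF g k A] by simp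
  have 3: "f' g \<in> carrier (Hom (act g B) D)" by (rule cross_hom_in[OF f' g])
  show ?thesis unfolding cross_term_def by (rule lincat_cmp_closed[OF lincat_C act_ob[OF k
      A] act_ob[OF g B] D 2 3])
qed

lemma term_zero_left:
  assumes A: "A \<in> ob C" and B: "B \<in> ob C" and D: "D \<in> ob C"
    and f: "f \<in> carrier (XHom A B)" and k: "k \<in> H" and g: "g \<in> H"
    and z: "f' g = zero (Hom (act g B) D)"
  shows "cross_term G C \<alpha> A B D f' f k g = zero (Hom (act k A) D)"
proof -
  let ?h = "inv g \<otimes> k"
  have h: "?h \<in> H" by (rule H_inv_mult_closed[OF g k])
  have 1: "f ?h \<in> carrier (Hom (act ?h A) B)" by (rule cross_hom_in[OF f h])
  have 2: "fm (\<alpha> g) (act ?h A) B (f ?h) \<in> carrier (Hom (act k A) (act g B))"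
    using lin_functor_hom[OF act_functor[OF g] act_ob[OF h A] B 1] act_act_inv_mult[OF g k A] by simp
  show ?thesis unfolding cross_term_def z by (rule lincat_cmp_zero_left[OF lincat_C act_ob[OF
      k A] act_ob[OF g B] D 2])
qed

lemma term_zero_right:
  assumes A: "A \<in> ob C" and B: "B \<in> ob C" and D: "D \<in> ob C"
    and f': "f' \<in> carrier (XHom B D)" and k: "k \<in> H" and g: "g \<in> H"
    and z: "f (inv g \<otimes> k) = zero (Hom (act (inv g \<otimes> k) A) B)"
  shows "cross_term G C \<alpha> A B D f' f k g = zero (Hom (act k A) D)"
proof -
  let ?h = "inv g \<otimes> k"
  have h: "?h \<in> H" by (rule H_inv_mult_closed[OF g k])
  have 2: "fm (\<alpha> g) (act ?h A) B (f ?h) = zero (Hom (act k A) (act g B))"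
    using lin_functor_zero[OF lincat_C lincat_C act_functor[OF g] act_ob[OF h A] B]
        act_act_inv_mult[OF g k A] z by simp
  have 3: "f' g \<in> carrier (Hom (act g B) D)" by (rule cross_hom_in[OF f' g])
  show ?thesis unfolding cross_term_def 2 by (rule lincat_cmp_zero_right[OF lincat_C act_ob[OF
      k A] act_ob[OF g B] D 3])
qed

lemma cmp_eq_finsum_superset:
  assumes A: "A \<in> ob C" and B: "B \<in> ob C" and D: "D \<in> ob C"
    and f': "f' \<in> carrier (XHom B D)" and f: "f \<in> carrier (XHom A B)" and k: "k \<in> H"
    and S: "finite S" "supp B D f' \<subseteq> S" "S \<subseteq> H"
  shows "cmp XCat A B D f' f k = finsum (Hom (act k A) D) (cross_term G C \<alpha> A B D f' f k) S"
  unfolding cross_simps(3)[OF k]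
proof (rule abelian_monoid.finsum_mono_neutral_left[OF act_hom_abelian_monoid[OF k A D] S(1,2)])
  fix i assume "i \<in> S - supp B D f'"
  then have i: "i \<in> H" "i \<notin> supp B D f'" using S by auto
  show "cross_term G C \<alpha> A B D f' f k i = zero (Hom (act k A) D)"
    by (rule term_zero_left[where f'=f', OF A B D f k i(1) not_in_supp[OF i]])
next
  show "cross_term G C \<alpha> A B D f' f k \<in> S \<rightarrow> carrier (Hom (act k A) D)"
    using term_closed[OF A B D f' f k] S(3) by blast
qed simp

lemma cmp_zero_outside:
  assumes A: "A \<in> ob C" and B: "B \<in> ob C" and D: "D \<in> ob C"
    and f': "f' \<in> carrier (XHom B D)" and f: "f \<in> carrier (XHom A B)" and k: "k \<in> H"
    and nk: "k \<notin> (\<lambda>(a, b). (a \<otimes> b)) ` (supp B D f' \<times> supp A B f)"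
  shows "cmp XCat A B D f' f k = zero (Hom (act k A) D)"
  unfolding cross_simps(3)[OF k]
proof (rule abelian_monoid.finsum_zero_eqI[OF act_hom_abelian_monoid[OF k A D]])
  fix g assume g: "g \<in> supp B D f'"
  then have gH: "g \<in> H" by (rule supp_in_H)
  have "inv g \<otimes> k \<notin> supp A B f"
  proof
    assume "inv g \<otimes> k \<in> supp A B f"
    then have "g \<otimes> (inv g \<otimes> k) \<in> (\<lambda>(a, b). (a \<otimes> b)) ` (supp B D f' \<times> supp A B f)" using g by force
    then show False using nk mult_inv_mult_cancel[OF gH k] by simp
  qed
  then show "cross_term G C \<alpha> A B D f' f k g = zero (Hom (act k A) D)"
    using term_zero_right[OF A B D f' k gH] not_in_supp[OF H_inv_mult_closed[OF gH k]] by blast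
qed

lemma supp_cmp_subset:
  assumes A: "A \<in> ob C" and B: "B \<in> ob C" and D: "D \<in> ob C"
    and f': "f' \<in> carrier (XHom B D)" and f: "f \<in> carrier (XHom A B)"
  shows "supp A D (cmp XCat A B D f' f) \<subseteq> (\<lambda>(a, b). (a \<otimes> b)) ` (supp B D f' \<times> supp A B f)"
  using cmp_zero_outside[OF A B D f' f] by (auto simp: cross_supp_def)

lemma cmp_closed:
  assumes A: "A \<in> ob C" and B: "B \<in> ob C" and D: "D \<in> ob C"
    and f': "f' \<in> carrier (XHom B D)" and f: "f \<in> carrier (XHom A B)"
  shows "cmp XCat A B D f' f \<in> carrier (XHom A D)"
proof (rule cross_homI)
  fix k assume k: "k \<in> H"
  show "cmp XCat A B D f' f k \<in> carrier (Hom (act k A) D)"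
    unfolding cross_simps(3)[OF k]
    by (rule abelian_monoid.finsum_closed[OF act_hom_abelian_monoid[OF k A D]]) (rule Pi_I, rule
        term_closed[OF A B D f' f k], erule supp_in_H)
next
  fix k assume "k \<notin> H" then show "cmp XCat A B D f' f k = undefined" by (rule cross_simps(4))
next
  show "finite (supp A D (cmp XCat A B D f' f))"
    by (rule finite_subset[OF supp_cmp_subset[OF assms]]) (simp add: finite_supp[OF f] finite_supp[OF f'])
qed

lemma ide_closed: assumes A: "A \<in> ob C" shows "ide XCat A \<in> carrier (XHom A A)"
proof (rule cross_homI)
  fix g assume g: "g \<in> H"
  show "ide XCat A g \<in> carrier (Hom (act g A) A)"
    using g lincat_ide_closed[OF lincat_C A] act_one_ob[OF A] lincat_zero_closed[OF lincat_C
        act_ob[OF g A] A] by (simp add: cross_simps)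
next
  fix g assume "g \<notin> H" then show "ide XCat A g = undefined" using H.one_closed by (auto simp: cross_simps)
next
  show "finite (supp A A (ide XCat A))"
    by (rule finite_suppI[of "{\<one>}"]) (auto simp: cross_simps)
qed

lemma ide_at_one: "A \<in> ob C \<Longrightarrow> ide XCat A \<one> = ide C A"
  by (simp add: cross_simps)

lemma ide_at_other: "g \<in> H \<Longrightarrow> g \<noteq> \<one> \<Longrightarrow> ide XCat A g = zero (Hom (act g A) A)"
  by (simp add: cross_simps)

lemma cmp_ide_right:
  assumes A: "A \<in> ob C" and B: "B \<in> ob C" and f: "f \<in> carrier (XHom A B)"
  shows "cmp XCat A A B f (ide XCat A) = f"
proof (rule cross_hom_eqI)
  fix k assume k: "k \<in> H"
  have "cmp XCat A A B f (ide XCat A) k = finsum (Hom (act k A) B) (cross_term G C \<alpha> A A B f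
      (ide XCat A) k) (supp A B f)"
    by (rule cross_simps(3)[OF k])
  also have "\<dots> = (if k \<in> supp A B f then cross_term G C \<alpha> A A B f (ide XCat A) k k else zero (Hom (act k A) B))"
  proof (rule abelian_monoid.finsum_eq_single[OF act_hom_abelian_monoid[OF k A B] finite_supp[OF f]])
    show "cross_term G C \<alpha> A A B f (ide XCat A) k \<in> supp A B f \<rightarrow> carrier (Hom (act k A) B)"
      by (rule Pi_I, rule term_closed[OF A A B f ide_closed[OF A] k], erule supp_in_H)
    fix j assume j: "j \<in> supp A B f" "j \<noteq> k"
    then have jH: "j \<in> H" using supp_in_H by blast
    have "inv j \<otimes> k \<noteq> \<one>"
    proof
      assume "inv j \<otimes> k = \<one>"
      then have "j \<otimes> (inv j \<otimes> k) = (j \<otimes> \<one>)" by simp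
      then show False using mult_inv_mult_cancel[OF jH k] j(2) H_in_carrier[OF jH] by simp
    qed
    then show "cross_term G C \<alpha> A A B f (ide XCat A) k j = zero (Hom (act k A) B)"
      using term_zero_right[OF A A B f k jH] ide_at_other[OF H_inv_mult_closed[OF jH k]] by blast
  qed
  also have "\<dots> = f k"
  proof (cases "k \<in> supp A B f")
    case True
    have e: "inv k \<otimes> k = \<one>" using H_in_carrier[OF k] by simp
    have "cross_term G C \<alpha> A A B f (ide XCat A) k k = cmp C (act k A) (act k A) B (f k) (fm (\<alpha> k) A A (ide C A))"
      unfolding cross_term_def e using ide_at_one[OF A] act_one_ob[OF A] by simp
    also have "\<dots> = cmp C (act k A) (act k A) B (f k) (ide C (act k A))"
      using lin_functor_ide[OF act_functor[OF k] A] by simp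
    also have "\<dots> = f k" by (rule lincat_ide_right[OF lincat_C act_ob[OF k A] B cross_hom_in[OF f k]])
    finally show ?thesis using True by simp
  next
    case False then show ?thesis using not_in_supp[OF k] by simp
  qed
  finally show "cmp XCat A A B f (ide XCat A) k = f k" .
qed (auto simp: cross_simps cross_hom_out[OF f])

lemma cmp_ide_left:
  assumes A: "A \<in> ob C" and B: "B \<in> ob C" and f: "f \<in> carrier (XHom A B)"
  shows "cmp XCat A B B (ide XCat B) f = f"
proof (rule cross_hom_eqI)
  fix k assume k: "k \<in> H"
  have sub1: "supp B B (ide XCat B) \<subseteq> {\<one>}" by (auto simp: cross_supp_def cross_simps)
  have "cmp XCat A B B (ide XCat B) f k = finsum (Hom (act k A) B) (cross_term G C \<alpha> A B B (ide XCat B) f k) {\<one>}"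
    by (rule cmp_eq_finsum_superset[OF A B B ide_closed[OF B] f k]) (use sub1 H.one_closed in auto)
  also have "\<dots> = cross_term G C \<alpha> A B B (ide XCat B) f k \<one>"
    using abelian_monoid.finsum_eq_single[OF act_hom_abelian_monoid[OF k A B], of "{\<one>}" _ "\<one>"]
      term_closed[OF A B B ide_closed[OF B] f k H.one_closed] by simp
  also have "\<dots> = f k"
  proof -
    have e: "inv \<one> \<otimes> k = k" using H_in_carrier[OF k] by simp
    have "cross_term G C \<alpha> A B B (ide XCat B) f k \<one> = cmp C (act k A) B B (ide C B) (f k)"
      unfolding cross_term_def e using ide_at_one[OF B] act_one_ob[OF B] act_one_ob[OF act_ob[OF k
          A]] act_one_hom[OF act_ob[OF k A] B cross_hom_in[OF f k]] by simp
    also have "\<dots> = f k" by (rule lincat_ide_left[OF lincat_C act_ob[OF k A] B cross_hom_in[OF f k]])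
    finally show ?thesis .
  qed
  finally show "cmp XCat A B B (ide XCat B) f k = f k" .
qed (auto simp: cross_simps cross_hom_out[OF f])

lemma shifted_closed:
  assumes A: "A \<in> ob C" and B: "B \<in> ob C" and f: "f \<in> carrier (XHom A B)" and k: "k \<in>
      H" and x: "x \<in> H"
  shows "fm (\<alpha> x) (act (inv x \<otimes> k) A) B (f (inv x \<otimes> k)) \<in> carrier (Hom (act k A) (act x B))"
proof -
  let ?h = "inv x \<otimes> k"
  have h: "?h \<in> H" by (rule H_inv_mult_closed[OF x k])
  show ?thesis using lin_functor_hom[OF act_functor[OF x] act_ob[OF h A] B cross_hom_in[OF f h]]
      act_act_inv_mult[OF x k A] by simp
qed

lemma cmp_add_left:
  assumes A: "A \<in> ob C" and B: "B \<in> ob C" and D: "D \<in> ob C" and f: "f \<in> carrier (XHom A B)"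
    and g: "g \<in> carrier (XHom B D)" and g': "g' \<in> carrier (XHom B D)"
  shows "cmp XCat A B D (add (XHom B D) g g') f = add (XHom A D) (cmp XCat A B D g f) (cmp XCat A B D g' f)"
proof (rule cross_hom_eqI)
  fix k assume k: "k \<in> H"
  let ?S = "supp B D g \<union> supp B D g'"
  have Sf: "finite ?S" using finite_supp[OF g] finite_supp[OF g'] by simp
  have SH: "?S \<subseteq> H" by (auto simp: cross_supp_def)
  have Ssup: "supp B D (add (XHom B D) g g') \<subseteq> ?S" by (rule supp_add_subset[OF B D])
  have "cmp XCat A B D (add (XHom B D) g g') f k = finsum (Hom (act k A) D) (cross_term G C \<alpha> A B D
      (add (XHom B D) g g') f k) ?S"
    by (rule cmp_eq_finsum_superset[OF A B D cross_hom_add_closed[OF B D g g'] f k Sf Ssup SH])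
  also have "\<dots> = finsum (Hom (act k A) D) (\<lambda>x. add (Hom (act k A) D) (cross_term G C \<alpha> A B D g f k
      x) (cross_term G C \<alpha> A B D g' f k x)) ?S"
  proof (rule abelian_monoid.finsum_cong'[OF act_hom_abelian_monoid[OF k A D]])
    show "(\<lambda>x. add (Hom (act k A) D) (cross_term G C \<alpha> A B D g f k x) (cross_term G C \<alpha> A B D g' f k
        x)) \<in> ?S \<rightarrow> carrier (Hom (act k A) D)"
      using SH term_closed[OF A B D g f k] term_closed[OF A B D g' f k] abelian_monoid.a_closed[OF
          act_hom_abelian_monoid[OF k A D]] by blast
    fix x assume "x \<in> ?S"
    then have x: "x \<in> H" using SH by blast
    show "cross_term G C \<alpha> A B D (add (XHom B D) g g') f k x
        = add (Hom (act k A) D) (cross_term G C \<alpha> A B D g f k x) (cross_term G C \<alpha> A B D g' f k x)"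
      unfolding cross_term_def using x lincat_cmp_add_left[OF lincat_C act_ob[OF k A] act_ob[OF x B]
          D shifted_closed[OF A B f k x] cross_hom_in[OF g x] cross_hom_in[OF g' x]]
      by (simp add: cross_hom_simps(3))
  qed simp
  also have "\<dots> = add (Hom (act k A) D) (finsum (Hom (act k A) D) (cross_term G C \<alpha> A B D g f k) ?S)
      (finsum (Hom (act k A) D) (cross_term G C \<alpha> A B D g' f k) ?S)"
    by (rule abelian_monoid.finsum_addf[OF act_hom_abelian_monoid[OF k A D]]) (use SH term_closed[OF
        A B D g f k] term_closed[OF A B D g' f k] in blast)+
  also have "\<dots> = add (Hom (act k A) D) (cmp XCat A B D g f k) (cmp XCat A B D g' f k)"
    using cmp_eq_finsum_superset[OF A B D g f k Sf _ SH] cmp_eq_finsum_superset[OF A B D g' f k Sf _ SH] by simp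
  finally show "cmp XCat A B D (add (XHom B D) g g') f k = add (XHom A D) (cmp XCat A B D g
      f) (cmp XCat A B D g' f) k"
    using k by (simp add: cross_hom_simps(3))
qed (simp_all add: cross_simps cross_hom_simps(3))

lemma cmp_add_right:
  assumes A: "A \<in> ob C" and B: "B \<in> ob C" and D: "D \<in> ob C" and f: "f \<in> carrier (XHom A B)"
    and f': "f' \<in> carrier (XHom A B)" and g: "g \<in> carrier (XHom B D)"
  shows "cmp XCat A B D g (add (XHom A B) f f') = add (XHom A D) (cmp XCat A B D g f) (cmp XCat A B D g f')"
proof (rule cross_hom_eqI)
  fix k assume k: "k \<in> H"
  let ?S = "supp B D g"
  have SH: "?S \<subseteq> H" by (auto simp: cross_supp_def)
  have "cmp XCat A B D g (add (XHom A B) f f') k = finsum (Hom (act k A) D) (\<lambda>x. add (Hom (act k A)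
      D) (cross_term G C \<alpha> A B D g f k x) (cross_term G C \<alpha> A B D g f' k x)) ?S"
    unfolding cross_simps(3)[OF k]
  proof (rule abelian_monoid.finsum_cong'[OF act_hom_abelian_monoid[OF k A D]])
    show "(\<lambda>x. add (Hom (act k A) D) (cross_term G C \<alpha> A B D g f k x) (cross_term G C \<alpha> A B D g f' k
        x)) \<in> ?S \<rightarrow> carrier (Hom (act k A) D)"
      using SH term_closed[OF A B D g f k] term_closed[OF A B D g f' k] abelian_monoid.a_closed[OF
          act_hom_abelian_monoid[OF k A D]] by blast
    fix x assume "x \<in> ?S"
    then have x: "x \<in> H" using SH by blast
    let ?h = "inv x \<otimes> k"
    have h: "?h \<in> H" by (rule H_inv_mult_closed[OF x k])
    have "fm (\<alpha> x) (act ?h A) B (add (XHom A B) f f' ?h) = add (Hom (act k A) (act x B)) (fm (\<alpha> x)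
        (act ?h A) B (f ?h)) (fm (\<alpha> x) (act ?h A) B (f' ?h))"
      using lin_functor_add[OF act_functor[OF x] act_ob[OF h A] B cross_hom_in[OF f h]
          cross_hom_in[OF f' h]] h act_act_inv_mult[OF x k A] by (simp add: cross_hom_simps(3))
    then show "cross_term G C \<alpha> A B D g (add (XHom A B) f f') k x
        = add (Hom (act k A) D) (cross_term G C \<alpha> A B D g f k x) (cross_term G C \<alpha> A B D g f' k x)"
      unfolding cross_term_def using lincat_cmp_add_right[OF lincat_C act_ob[OF k A] act_ob[OF x B]
          D shifted_closed[OF A B f k x] shifted_closed[OF A B f' k x] cross_hom_in[OF g x]]
      by simp
  qed simp
  also have "\<dots> = add (Hom (act k A) D) (cmp XCat A B D g f k) (cmp XCat A B D g f' k)"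
    unfolding cross_simps(3)[OF k]
    by (rule abelian_monoid.finsum_addf[OF act_hom_abelian_monoid[OF k A D]]) (use SH term_closed[OF
        A B D g f k] term_closed[OF A B D g f' k] in blast)+
  finally show "cmp XCat A B D g (add (XHom A B) f f') k = add (XHom A D) (cmp XCat A B D g
      f) (cmp XCat A B D g f') k"
    using k by (simp add: cross_hom_simps(3))
qed (simp_all add: cross_simps cross_hom_simps(3))

lemma cmp_smult_left:
  assumes A: "A \<in> ob C" and B: "B \<in> ob C" and D: "D \<in> ob C" and f: "f \<in> carrier (XHom A B)"
    and g: "g \<in> carrier (XHom B D)" and r: "r \<in> carrier R"
  shows "cmp XCat A B D (smult (XHom B D) r g) f = smult (XHom A D) r (cmp XCat A B D g f)"
proof (rule cross_hom_eqI)
  fix k assume k: "k \<in> H"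
  let ?S = "supp B D g"
  have Sf: "finite ?S" by (rule finite_supp[OF g])
  have SH: "?S \<subseteq> H" by (auto simp: cross_supp_def)
  have Ssup: "supp B D (smult (XHom B D) r g) \<subseteq> ?S" by (rule supp_smult_subset[OF B D r])
  have "cmp XCat A B D (smult (XHom B D) r g) f k = finsum (Hom (act k A) D) (cross_term G C \<alpha> A B D
      (smult (XHom B D) r g) f k) ?S"
    by (rule cmp_eq_finsum_superset[OF A B D cross_hom_smult_closed[OF B D g r] f k Sf Ssup SH])
  also have "\<dots> = finsum (Hom (act k A) D) (\<lambda>x. smult (Hom (act k A) D) r (cross_term G C \<alpha> A B D g f k x)) ?S"
  proof (rule abelian_monoid.finsum_cong'[OF act_hom_abelian_monoid[OF k A D]])
    show "(\<lambda>x. smult (Hom (act k A) D) r (cross_term G C \<alpha> A B D g f k x)) \<in> ?S \<rightarrow> carrier (Hom (act k A) D)"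
      using SH term_closed[OF A B D g f k] module.smult_closed[OF lincat_hom_module[OF lincat_C
          act_ob[OF k A] D] r] by blast
    fix x assume "x \<in> ?S"
    then have x: "x \<in> H" using SH by blast
    show "cross_term G C \<alpha> A B D (smult (XHom B D) r g) f k x
        = smult (Hom (act k A) D) r (cross_term G C \<alpha> A B D g f k x)"
      unfolding cross_term_def using x lincat_cmp_smult_left[OF lincat_C act_ob[OF k A] act_ob[OF x
          B] D shifted_closed[OF A B f k x] cross_hom_in[OF g x] r]
      by (simp add: cross_hom_simps(4))
  qed simp
  also have "\<dots> = smult (Hom (act k A) D) r (cmp XCat A B D g f k)"
    unfolding cross_simps(3)[OF k]
    by (rule module_smult_finsum[symmetric, OF lincat_hom_module[OF lincat_C act_ob[OF k A] D] r
        Sf]) (use SH term_closed[OF A B D g f k] in blast)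
  finally show "cmp XCat A B D (smult (XHom B D) r g) f k = smult (XHom A D) r (cmp XCat A B D g f) k"
    using k by (simp add: cross_hom_simps(4))
qed (simp_all add: cross_simps cross_hom_simps(4))

lemma cmp_smult_right:
  assumes A: "A \<in> ob C" and B: "B \<in> ob C" and D: "D \<in> ob C" and f: "f \<in> carrier (XHom A B)"
    and g: "g \<in> carrier (XHom B D)" and r: "r \<in> carrier R"
  shows "cmp XCat A B D g (smult (XHom A B) r f) = smult (XHom A D) r (cmp XCat A B D g f)"
proof (rule cross_hom_eqI)
  fix k assume k: "k \<in> H"
  let ?S = "supp B D g"
  have Sf: "finite ?S" by (rule finite_supp[OF g])
  have SH: "?S \<subseteq> H" by (auto simp: cross_supp_def)
  have "cmp XCat A B D g (smult (XHom A B) r f) k = finsum (Hom (act k A) D) (\<lambda>x. smult (Hom (act k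
      A) D) r (cross_term G C \<alpha> A B D g f k x)) ?S"
    unfolding cross_simps(3)[OF k]
  proof (rule abelian_monoid.finsum_cong'[OF act_hom_abelian_monoid[OF k A D]])
    show "(\<lambda>x. smult (Hom (act k A) D) r (cross_term G C \<alpha> A B D g f k x)) \<in> ?S \<rightarrow> carrier (Hom (act k A) D)"
      using SH term_closed[OF A B D g f k] module.smult_closed[OF lincat_hom_module[OF lincat_C
          act_ob[OF k A] D] r] by blast
    fix x assume "x \<in> ?S"
    then have x: "x \<in> H" using SH by blast
    let ?h = "inv x \<otimes> k"
    have h: "?h \<in> H" by (rule H_inv_mult_closed[OF x k])
    have "fm (\<alpha> x) (act ?h A) B (smult (XHom A B) r f ?h) = smult (Hom (act k A) (act x B)) r (fm
        (\<alpha> x) (act ?h A) B (f ?h))"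
      using lin_functor_smult[OF act_functor[OF x] act_ob[OF h A] B cross_hom_in[OF f h] r] h
          act_act_inv_mult[OF x k A] by (simp add: cross_hom_simps(4))
    then show "cross_term G C \<alpha> A B D g (smult (XHom A B) r f) k x
        = smult (Hom (act k A) D) r (cross_term G C \<alpha> A B D g f k x)"
      unfolding cross_term_def using lincat_cmp_smult_right[OF lincat_C act_ob[OF k A] act_ob[OF x
          B] D shifted_closed[OF A B f k x] cross_hom_in[OF g x] r]
      by simp
  qed simp
  also have "\<dots> = smult (Hom (act k A) D) r (cmp XCat A B D g f k)"
    unfolding cross_simps(3)[OF k]
    by (rule module_smult_finsum[symmetric, OF lincat_hom_module[OF lincat_C act_ob[OF k A] D] r
        Sf]) (use SH term_closed[OF A B D g f k] in blast)
  finally show "cmp XCat A B D g (smult (XHom A B) r f) k = smult (XHom A D) r (cmp XCat A B D g f) k"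
    using k by (simp add: cross_hom_simps(4))
qed (simp_all add: cross_simps cross_hom_simps(4))

lemma act_cross_term:
  assumes A: "A \<in> ob C" and B: "B \<in> ob C" and D: "D \<in> ob C"
    and f: "f \<in> carrier (XHom A B)" and g: "g \<in> carrier (XHom B D)" and k: "k \<in> H" and x: "x \<in> H" and n: "n \<in> H"
  shows "fm (\<alpha> x) (act (inv x \<otimes> k) A) D (cross_term G C \<alpha> A B D g f (inv x \<otimes> k) n)
    = cmp C (act k A) (act (x \<otimes> n) B) (act x D) (fm (\<alpha> x) (act n B) D (g n))
        (fm (\<alpha> (x \<otimes> n)) (act (inv (x \<otimes> n) \<otimes> k) A) B (f (inv (x \<otimes> n) \<otimes> k)))"
proof -
  let ?j = "inv x \<otimes> k" and ?xn = "x \<otimes> n"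
  let ?i = "inv ?xn \<otimes> k"
  have j: "?j \<in> H" and i: "?i \<in> H" by (simp_all add: x k n)
  have ij: "inv n \<otimes> ?j = ?i" using inv_mult_inv_mult[OF x n k] by simp
  have psi: "fm (\<alpha> n) (act ?i A) B (f ?i) \<in> carrier (Hom (act ?j A) (act n B))"
    using shifted_closed[OF A B f j n] ij by simp
  have o3: "act n (act ?i A) = act ?j A" using act_act_inv_mult[OF n j A] ij by simp
  have "fm (\<alpha> x) (act ?j A) D (cross_term G C \<alpha> A B D g f ?j n)
      = fm (\<alpha> x) (act ?j A) D (cmp C (act ?j A) (act n B) D (g n) (fm (\<alpha> n) (act ?i A) B (f ?i)))"
    unfolding cross_term_def ij ..
  also have "\<dots> = cmp C (act x (act ?j A)) (act x (act n B)) (act x D) (fm (\<alpha> x) (act n B) D (g n))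
        (fm (\<alpha> x) (act ?j A) (act n B) (fm (\<alpha> n) (act ?i A) B (f ?i)))"
    by (rule lin_functor_cmp[OF act_functor[OF x] act_ob[OF j A] act_ob[OF n B] D psi cross_hom_in[OF g n]])
  also have "\<dots> = cmp C (act k A) (act ?xn B) (act x D) (fm (\<alpha> x) (act n B) D (g n))
      (fm (\<alpha> ?xn) (act ?i A) B (f ?i))"
    using act_act_inv_mult[OF x k A] act_mult_ob[OF x n B] act_mult_hom[OF x n act_ob[OF i A]
        B cross_hom_in[OF f i]] o3
    by simp
  finally show ?thesis .
qed

lemma term_assoc_summand:
  assumes A: "A \<in> ob C" and B: "B \<in> ob C" and D: "D \<in> ob C" and E: "E \<in> ob C"
    and f: "f \<in> carrier (XHom A B)" and g: "g \<in> carrier (XHom B D)" and h: "h \<in> carrier (XHom D E)"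
    and k: "k \<in> H" and x: "x \<in> H" and n: "n \<in> H"
  shows "cmp C (act k A) (act x D) E (h x) (fm (\<alpha> x) (act (inv x \<otimes> k) A) D
      (cross_term G C \<alpha> A B D g f (inv x \<otimes> k) n))
    = cmp C (act k A) (act (x \<otimes> n) B) E (cross_term G C \<alpha> B D E h g (x \<otimes> n) x)
        (fm (\<alpha> (x \<otimes> n)) (act (inv (x \<otimes> n) \<otimes> k) A) B (f (inv (x \<otimes> n) \<otimes> k)))"
proof -
  have xn: "x \<otimes> n \<in> H" by (rule H.m_closed[OF x n])
  have c: "fm (\<alpha> x) (act n B) D (g n) \<in> carrier (Hom (act (x \<otimes> n) B) (act x D))"
    using lin_functor_hom[OF act_functor[OF x] act_ob[OF n B] D cross_hom_in[OF g n]] act_mult_ob[OF x n B] by simp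
  have "cmp C (act (x \<otimes> n) B) (act x D) E (h x) (fm (\<alpha> x) (act n B) D (g n))
      = cross_term G C \<alpha> B D E h g (x \<otimes> n) x"
    unfolding cross_term_def inv_mult_mult_cancel[OF x n] ..
  then show ?thesis
    unfolding act_cross_term[OF A B D f g k x n]
    using lincat_cmp_assoc[OF lincat_C act_ob[OF k A] act_ob[OF xn B] act_ob[OF x D] E
        shifted_closed[OF A B f k xn] c
        cross_hom_in[OF h x]]
    by simp
qed

lemma term_cmp_expand:
  assumes A: "A \<in> ob C" and B: "B \<in> ob C" and D: "D \<in> ob C" and E: "E \<in> ob C"
    and f: "f \<in> carrier (XHom A B)" and g: "g \<in> carrier (XHom B D)" and h: "h \<in> carrier (XHom D E)"
    and k: "k \<in> H" and x: "x \<in> H"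
  shows "cross_term G C \<alpha> A D E h (cmp XCat A B D g f) k x
    = finsum (Hom (act k A) E) (\<lambda>n. cmp C (act k A) (act (x \<otimes> n) B) E (cross_term G C \<alpha> B D E h g (x \<otimes> n) x)
        (fm (\<alpha> (x \<otimes> n)) (act (inv (x \<otimes> n) \<otimes> k) A) B (f (inv (x \<otimes> n) \<otimes> k)))) (supp B D g)"
proof -
  let ?j = "inv x \<otimes> k"
  have j: "?j \<in> H" by (rule H_inv_mult_closed[OF x k])
  have fin: "finite (supp B D g)" by (rule finite_supp[OF g])
  have P1: "cross_term G C \<alpha> A B D g f ?j \<in> supp B D g \<rightarrow> carrier (Hom (act ?j A) D)"
    by (rule Pi_I, rule term_closed[OF A B D g f j], erule supp_in_H)
  have P2: "(\<lambda>n. fm (\<alpha> x) (act ?j A) D (cross_term G C \<alpha> A B D g f ?j n)) \<in> supp B D g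
      \<rightarrow> carrier (Hom (act k A) (act x D))"
  proof
    fix n assume "n \<in> supp B D g"
    then have n: "n \<in> H" by (rule supp_in_H)
    show "fm (\<alpha> x) (act ?j A) D (cross_term G C \<alpha> A B D g f ?j n) \<in> carrier (Hom (act k A) (act x D))"
      using lin_functor_hom[OF act_functor[OF x] act_ob[OF j A] D term_closed[OF A B D g f j n]]
          act_act_inv_mult[OF x k A] by simp
  qed
  have "cross_term G C \<alpha> A D E h (cmp XCat A B D g f) k x
     = cmp C (act k A) (act x D) E (h x) (fm (\<alpha> x) (act ?j A) D (finsum (Hom (act ?j A) D)
         (cross_term G C \<alpha> A B D g f ?j) (supp B D g)))"
    unfolding cross_term_def cross_simps(3)[OF j] ..
  also have "fm (\<alpha> x) (act ?j A) D (finsum (Hom (act ?j A) D) (cross_term G C \<alpha> A B D g f ?j) (supp B D g))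
     = finsum (Hom (act k A) (act x D)) (\<lambda>n. fm (\<alpha> x) (act ?j A) D (cross_term G C \<alpha> A B D g f ?j n)) (supp B D g)"
    using lin_functor_finsum[OF lincat_C lincat_C act_functor[OF x] act_ob[OF j A] D fin P1]
        act_act_inv_mult[OF x k A] by simp
  also have "cmp C (act k A) (act x D) E (h x) (finsum (Hom (act k A) (act x D)) (\<lambda>n. fm (\<alpha> x) (act
      ?j A) D (cross_term G C \<alpha> A B D g f ?j n)) (supp B D g))
     = finsum (Hom (act k A) E) (\<lambda>n. cmp C (act k A) (act x D) E (h x) (fm (\<alpha> x) (act ?j A) D
         (cross_term G C \<alpha> A B D g f ?j n))) (supp B D g)"
    by (rule lincat_cmp_finsum_right[OF lincat_C act_ob[OF k A] act_ob[OF x D] E cross_hom_in[OF h x] fin P2])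
  also have "\<dots> = finsum (Hom (act k A) E) (\<lambda>n. cmp C (act k A) (act (x \<otimes> n) B) E (cross_term
      G C \<alpha> B D E h g (x \<otimes> n) x)
        (fm (\<alpha> (x \<otimes> n)) (act (inv (x \<otimes> n) \<otimes> k) A) B (f (inv (x \<otimes> n) \<otimes> k)))) (supp B D g)"
  proof (rule abelian_monoid.finsum_cong'[OF act_hom_abelian_monoid[OF k A E]])
    fix n assume "n \<in> supp B D g"
    then show "cmp C (act k A) (act x D) E (h x) (fm (\<alpha> x) (act ?j A) D (cross_term G C \<alpha> A B D g f ?j n))
      = cmp C (act k A) (act (x \<otimes> n) B) E (cross_term G C \<alpha> B D E h g (x \<otimes> n) x)
        (fm (\<alpha> (x \<otimes> n)) (act (inv (x \<otimes> n) \<otimes> k) A) B (f (inv (x \<otimes> n) \<otimes> k)))"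
      by (rule term_assoc_summand[OF A B D E f g h k x supp_in_H])
  qed (use x in \<open>auto intro!: lincat_cmp_closed[OF lincat_C act_ob[OF k A] act_ob[OF _ B] E]
      shifted_closed[OF A B f k]
         term_closed[OF B D E h g _ x] H.m_closed dest: supp_in_H\<close>)
  finally show ?thesis .
qed

lemma finsum_translate:
  assumes M: "abelian_monoid M" and fin: "finite I" and x: "x \<in> H" and S: "S \<subseteq> H" and I: "I \<subseteq> H"
    and sub: "(\<otimes>) x ` S \<subseteq> I" and u: "u \<in> I \<rightarrow> carrier M"
    and zero: "\<And>m. m \<in> I \<Longrightarrow> inv x \<otimes> m \<notin> S \<Longrightarrow> u m = \<zero>\<^bsub>M\<^esub>"
  shows "finsum M u I = finsum M (\<lambda>n. u (x \<otimes> n)) S"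
proof -
  have "finsum M u ((\<otimes>) x ` S) = finsum M u I"
  proof (rule abelian_monoid.finsum_mono_neutral_left[OF M fin sub])
    fix m assume m: "m \<in> I - (\<otimes>) x ` S"
    have "inv x \<otimes> m \<notin> S"
    proof
      assume "inv x \<otimes> m \<in> S"
      then have "x \<otimes> (inv x \<otimes> m) \<in> (\<otimes>) x ` S" by (rule imageI)
      then have "m \<in> (\<otimes>) x ` S" by (simp only: mult_inv_mult_cancel[OF x subsetD[OF I DiffD1[OF m]]])
      then show False by (rule DiffD2[OF m])
    qed
    then show "u m = \<zero>\<^bsub>M\<^esub>" by (rule zero[OF DiffD1[OF m]])
  qed (use u in simp_all)
  also have "finsum M u ((\<otimes>) x ` S) = finsum M (\<lambda>n. u (x \<otimes> n)) S"
  proof (rule abelian_monoid.finsum_reindex[OF M])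
    show "u \<in> (\<otimes>) x ` S \<rightarrow> carrier M" using u sub by blast
    show "inj_on ((\<otimes>) x) S"
    proof (rule inj_onI)
      fix a b assume "a \<in> S" "b \<in> S" "x \<otimes> a = x \<otimes> b"
      then show "a = b"
        using inv_mult_mult_cancel[OF x subsetD[OF S], of a] inv_mult_mult_cancel[OF x
            subsetD[OF S], of b] by metis
    qed
  qed
  finally show ?thesis by (rule sym)
qed

lemma term_cmp_eq_finsum:
  assumes A: "A \<in> ob C" and B: "B \<in> ob C" and D: "D \<in> ob C" and E: "E \<in> ob C"
    and f: "f \<in> carrier (XHom A B)" and g: "g \<in> carrier (XHom B D)" and h: "h \<in> carrier (XHom D E)"
    and k: "k \<in> H" and x: "x \<in> H" and M: "finite M" "M \<subseteq> H" "(\<otimes>) x ` supp B D g \<subseteq> M"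
  shows "cross_term G C \<alpha> A D E h (cmp XCat A B D g f) k x = finsum (Hom (act k A) E)
    (\<lambda>m. cmp C (act k A) (act m B) E (cross_term G C \<alpha> B D E h g m x) (fm (\<alpha> m) (act (inv m \<otimes> k)
        A) B (f (inv m \<otimes> k)))) M"
  unfolding term_cmp_expand[OF A B D E f g h k x]
proof (rule finsum_translate[symmetric, OF act_hom_abelian_monoid[OF k A E] M(1) x _ M(2,3)])
  show "supp B D g \<subseteq> H" by (auto dest: supp_in_H)
  show "(\<lambda>m. cmp C (act k A) (act m B) E (cross_term G C \<alpha> B D E h g m x) (fm (\<alpha> m) (act (inv m \<otimes>
      k) A) B (f (inv m \<otimes> k))))
      \<in> M \<rightarrow> carrier (Hom (act k A) E)"
    using M(2) by (auto intro!: lincat_cmp_closed[OF lincat_C act_ob[OF k A] act_ob[OF _ B] E]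
        shifted_closed[OF A B f k]
        term_closed[OF B D E h g _ x])
  fix m assume m: "m \<in> M" "inv x \<otimes> m \<notin> supp B D g"
  have mH: "m \<in> H" by (rule subsetD[OF M(2) m(1)])
  have z: "g (inv x \<otimes> m) = zero (Hom (act (inv x \<otimes> m) B) D)"
    by (rule not_in_supp[OF H_inv_mult_closed[OF x mH] m(2)])
  show "cmp C (act k A) (act m B) E (cross_term G C \<alpha> B D E h g m x) (fm (\<alpha> m) (act (inv m
      \<otimes> k) A) B (f (inv m \<otimes> k)))
      = zero (Hom (act k A) E)"
    unfolding term_zero_right[where f=g, OF B D E h mH x z]
    by (rule lincat_cmp_zero_left[OF lincat_C act_ob[OF k A] act_ob[OF mH B] E shifted_closed[OF A B f k mH]])
qed

text \<open>Both sides at k are the double sum over x in supp h and m in (supp h)(supp g) of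
  (h_x x)(g_{x\<inverse> m} x\<inverse> m)(f_{m\<inverse> k} m\<inverse> k), grouped once by m and once by x.\<close>

lemma cmp_assoc:
  assumes A: "A \<in> ob C" and B: "B \<in> ob C" and D: "D \<in> ob C" and E: "E \<in> ob C"
    and f: "f \<in> carrier (XHom A B)" and g: "g \<in> carrier (XHom B D)" and h: "h \<in> carrier (XHom D E)"
  shows "cmp XCat A D E h (cmp XCat A B D g f) = cmp XCat A B E (cmp XCat B D E h g) f"
proof (rule cross_hom_eqI)
  fix k assume k: "k \<in> H"
  let ?M = "(\<lambda>(a, b). (a \<otimes> b)) ` (supp D E h \<times> supp B D g)"
  have Mf: "finite ?M" using finite_supp[OF g] finite_supp[OF h] by simp
  have MH: "?M \<subseteq> H" by (auto dest: supp_in_H)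
  have finh: "finite (supp D E h)" by (rule finite_supp[OF h])
  define U where "U x m = cmp C (act k A) (act m B) E (cross_term G C \<alpha> B D E h g m x)
        (fm (\<alpha> m) (act (inv m \<otimes> k) A) B (f (inv m \<otimes> k)))" for x m
  have Ucl: "U x m \<in> carrier (Hom (act k A) E)" if "x \<in> H" "m \<in> H" for x m
    unfolding U_def by (rule lincat_cmp_closed[OF lincat_C act_ob[OF k A] act_ob[OF that(2) B] E
        shifted_closed[OF A B f k that(2)] term_closed[OF B D E h g that(2) that(1)]])
  have "cmp XCat A B E (cmp XCat B D E h g) f k
      = finsum (Hom (act k A) E) (cross_term G C \<alpha> A B E (cmp XCat B D E h g) f k) ?M"
    by (rule cmp_eq_finsum_superset[OF A B E cmp_closed[OF B D E h g] f k Mf supp_cmp_subset[OF B D E h g] MH])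
  also have "\<dots> = finsum (Hom (act k A) E) (\<lambda>m. finsum (Hom (act k A) E) (\<lambda>x. U x m) (supp D E h)) ?M"
  proof (rule abelian_monoid.finsum_cong'[OF act_hom_abelian_monoid[OF k A E]])
    fix m assume "m \<in> ?M"
    then have m: "m \<in> H" by (rule subsetD[OF MH])
    have P: "cross_term G C \<alpha> B D E h g m \<in> supp D E h \<rightarrow> carrier (Hom (act m B) E)"
      by (rule Pi_I, rule term_closed[OF B D E h g m], erule supp_in_H)
    show "cross_term G C \<alpha> A B E (cmp XCat B D E h g) f k m = finsum (Hom (act k A) E) (\<lambda>x. U x m) (supp D E h)"
      unfolding cross_term_def[of G C \<alpha> A B E] cross_simps(3)[OF m] U_def
      by (rule lincat_cmp_finsum_left[OF lincat_C act_ob[OF k A] act_ob[OF m B] E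
          shifted_closed[OF A B f k m] finh P])
  qed (use MH in \<open>auto intro!: abelian_monoid.finsum_closed[OF act_hom_abelian_monoid[OF k A
      E]] Ucl dest: supp_in_H\<close>)
  also have "\<dots> = finsum (Hom (act k A) E) (\<lambda>x. finsum (Hom (act k A) E) (\<lambda>m. U x m) ?M) (supp D E h)"
    by (rule abelian_monoid.finsum_swap[OF act_hom_abelian_monoid[OF k A E] Mf finh, of "\<lambda>m x. U x m"])
       (use MH in \<open>blast intro: Ucl supp_in_H\<close>)
  also have "\<dots> = finsum (Hom (act k A) E) (cross_term G C \<alpha> A D E h (cmp XCat A B D g f) k) (supp D E h)"
  proof (rule abelian_monoid.finsum_cong'[OF act_hom_abelian_monoid[OF k A E]])
    fix x assume x: "x \<in> supp D E h"
    have "(\<otimes>) x ` supp B D g \<subseteq> ?M" using x by auto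
    then show "finsum (Hom (act k A) E) (\<lambda>m. U x m) ?M = cross_term G C \<alpha> A D E h (cmp XCat A B D g f) k x"
      unfolding U_def by (rule term_cmp_eq_finsum[OF A B D E f g h k supp_in_H[OF x] Mf MH, symmetric])
  qed (auto intro: term_closed[OF A D E h cmp_closed[OF A B D g f] k] dest: supp_in_H)
  also have "\<dots> = cmp XCat A D E h (cmp XCat A B D g f) k"
    by (rule cross_simps(3)[OF k, symmetric])
  finally show "cmp XCat A D E h (cmp XCat A B D g f) k = cmp XCat A B E (cmp XCat B D E h g) f k"
    by (rule sym)
qed (simp_all add: cross_simps)

theorem lincat_cross: "lincat R XCat"
  unfolding lincat_def
  apply (intro conjI)
  apply (rule lincat_cring[OF lincat_C])
  apply (simp add: cross_simps(1,2) cross_hom_module)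
  apply (simp add: cross_simps(1,2) ide_closed)
  apply (simp add: cross_simps(1,2) cmp_closed)
  apply (simp add: cross_simps(1,2) cmp_assoc)
  apply (simp add: cross_simps(1,2) cmp_ide_left cmp_ide_right)
  apply (simp add: cross_simps(1,2) cmp_add_left cmp_add_right cmp_smult_left cmp_smult_right)
  done


lemma single_closed:
  assumes A: "A \<in> ob C" and B: "B \<in> ob C" and h: "h \<in> H" and u: "u \<in> carrier (Hom (act h A) B)"
  shows "cross_single H C \<alpha> A B h u \<in> carrier (XHom A B)"
proof (rule cross_homI)
  fix k assume k: "k \<in> H"
  show "cross_single H C \<alpha> A B h u k \<in> carrier (Hom (act k A) B)"
    using u k lincat_zero_closed[OF lincat_C act_ob[OF k A] B] by (auto simp: cross_single_def)
next
  fix k assume "k \<notin> H" then show "cross_single H C \<alpha> A B h u k = undefined" using h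
      by (auto simp: cross_single_def)
next
  show "finite (supp A B (cross_single H C \<alpha> A B h u))"
    by (rule finite_suppI[of "{h}"]) (auto simp: cross_single_def)
qed

lemma cmp_single_left:
  assumes A: "A \<in> ob C" and B: "B \<in> ob C" and D: "D \<in> ob C" and h: "h \<in> H"
    and u: "u \<in> carrier (Hom (act h B) D)" and f: "f \<in> carrier (XHom A B)"
  shows "cmp XCat A B D (cross_single H C \<alpha> B D h u) f =
    (\<lambda>k. if k \<in> H then cmp C (act k A) (act h B) D u (fm (\<alpha> h) (act (inv h \<otimes> k) A) B (f (inv
        h \<otimes> k))) else undefined)"
proof (rule cross_hom_eqI)
  fix k assume k: "k \<in> H"
  have "cmp XCat A B D (cross_single H C \<alpha> B D h u) f k = finsum (Hom (act k A) D) (cross_term G C \<alpha>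
      A B D (cross_single H C \<alpha> B D h u) f k) {h}"
    by (rule cmp_eq_finsum_superset[OF A B D single_closed[OF B D h u] f k]) (auto simp:
        cross_single_def cross_supp_def h)
  also have "\<dots> = cross_term G C \<alpha> A B D (cross_single H C \<alpha> B D h u) f k h"
    using abelian_monoid.finsum_eq_single[OF act_hom_abelian_monoid[OF k A D], of "{h}" _ h]
      term_closed[OF A B D single_closed[OF B D h u] f k h] by simp
  also have "\<dots> = cmp C (act k A) (act h B) D u (fm (\<alpha> h) (act (inv h \<otimes> k) A) B (f (inv h \<otimes> k)))"
    by (simp add: cross_term_def cross_single_def)
  finally show "cmp XCat A B D (cross_single H C \<alpha> B D h u) f k =
    (\<lambda>k. if k \<in> H then cmp C (act k A) (act h B) D u (fm (\<alpha> h) (act (inv h \<otimes> k) A) B (f (inv h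
        \<otimes> k))) else undefined) k"
    using k by simp
qed (simp_all add: cross_simps)

lemma cmp_single_single:
  assumes A: "A \<in> ob C" and B: "B \<in> ob C" and D: "D \<in> ob C" and h: "h \<in> H" and h': "h' \<in> H"
    and u: "u \<in> carrier (Hom (act h B) D)" and u': "u' \<in> carrier (Hom (act h' A) B)"
  shows "cmp XCat A B D (cross_single H C \<alpha> B D h u) (cross_single H C \<alpha> A B h' u') =
     cross_single H C \<alpha> A D (h \<otimes> h') (cmp C (act (h \<otimes> h') A) (act h B) D u (fm (\<alpha> h) (act h' A) B u'))"
  unfolding cmp_single_left[OF A B D h u single_closed[OF A B h' u']]
proof (rule ext)
  fix k
  show "(if k \<in> H then cmp C (act k A) (act h B) D u (fm (\<alpha> h) (act (inv h \<otimes> k) A) B (cross_single H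
      C \<alpha> A B h' u' (inv h \<otimes> k))) else undefined) =
      cross_single H C \<alpha> A D (h \<otimes> h') (cmp C (act (h \<otimes> h') A) (act h B) D u (fm (\<alpha> h) (act h' A) B u')) k"
  proof (cases "k \<in> H")
    case k: True
    show ?thesis
    proof (cases "k = (h \<otimes> h')")
      case True
      then have "inv h \<otimes> k = h'" using inv_mult_mult_cancel[OF h h'] by simp
      then show ?thesis using True k by (simp add: cross_single_def)
    next
      case False
      have j: "inv h \<otimes> k \<in> H" by (rule H_inv_mult_closed[OF h k])
      have ne: "inv h \<otimes> k \<noteq> h'" using False mult_inv_mult_cancel[OF h k] by auto
      have "fm (\<alpha> h) (act (inv h \<otimes> k) A) B (zero (Hom (act (inv h \<otimes> k) A) B)) = zero (Hom (act k A) (act h B))"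
        using lin_functor_zero[OF lincat_C lincat_C act_functor[OF h] act_ob[OF j A] B]
            act_act_inv_mult[OF h k A] by simp
      then show ?thesis using k False ne j lincat_cmp_zero_right[OF lincat_C act_ob[OF k A] act_ob[OF h B] D u]
        by (simp add: cross_single_def)
    qed
  next
    case False
    then have "k \<noteq> (h \<otimes> h')" using H.m_closed[OF h h'] by auto
    then show ?thesis using False by (simp add: cross_single_def)
  qed
qed

lemma ide_eq_single: "ide XCat A = cross_single H C \<alpha> A A \<one> (ide C A)"
  by (simp add: cross_simps cross_single_def)


lemma act_inv_act: "g \<in> H \<Longrightarrow> A \<in> ob C \<Longrightarrow> act (inv g) (act g A) = A"
  using act_mult_ob[of "inv g" g A] act_one_ob[of A] H.m_inv_closed H_in_carrier by simp

lemma cmp_single_inv: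
  assumes A: "A \<in> ob C" and g: "g \<in> H"
  shows "cmp XCat A (act g A) A (cross_single H C \<alpha> (act g A) A (inv g) (ide C A))
      (cross_single H C \<alpha> A (act g A) g (ide C (act g A))) = ide XCat A"
proof -
  have gA: "act g A \<in> ob C" by (rule act_ob[OF g A])
  have u: "ide C A \<in> carrier (Hom (act (inv g) (act g A)) A)"
    using lincat_ide_closed[OF lincat_C A] act_inv_act[OF g A] by simp
  show ?thesis
    unfolding cmp_single_single[OF A gA A H.m_inv_closed[OF g] g u lincat_ide_closed[OF lincat_C gA]] ide_eq_single
    using lin_functor_ide[OF act_functor[OF H.m_inv_closed[OF g]] gA] act_inv_act[OF g A] act_one_ob[OF A]
      lincat_ide_left[OF lincat_C A A lincat_ide_closed[OF lincat_C A]] H_in_carrier[OF g]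
    by simp
qed

lemma cmp_single_inv':
  assumes A: "A \<in> ob C" and g: "g \<in> H"
  shows "cmp XCat (act g A) A (act g A) (cross_single H C \<alpha> A (act g A) g (ide C (act g A)))
      (cross_single H C \<alpha> (act g A) A (inv g) (ide C A)) = ide XCat (act g A)"
  using cmp_single_inv[OF act_ob[OF g A] H.m_inv_closed[OF g]] act_inv_act[OF g A] H_in_carrier[OF g]
  by simp

end

section \<open>Coproducts\<close>

lemma zmod_simps:
  "carrier zmod = {undefined}" "zero zmod = undefined" "add zmod x y = undefined" "smult zmod r x = undefined"
  by (simp_all add: zmod_def)

lemma module_zmod: "cring R \<Longrightarrow> module R zmod"
  by (rule moduleI, simp, rule abelian_groupI) (auto simp: zmod_simps)

lemma coprod_ob: "ob (coprod I Cf) = Sigma I (\<lambda>i. ob (Cf i))"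
  by (simp add: coprod_def)

lemma coprod_homm: "homm (coprod I Cf) (i, a) (j, b) = (if i = j then homm (Cf i) a b else zmod)"
  by (simp add: coprod_def)

lemma coprod_ide: "ide (coprod I Cf) (i, a) = ide (Cf i) a"
  by (simp add: coprod_def)

lemma coprod_homm_eq: "homm (coprod I Cf) (i, a) (i, b) = homm (Cf i) a b"
  by (simp add: coprod_def)

lemma coprod_homm_ne: "i \<noteq> j \<Longrightarrow> homm (coprod I Cf) (i, a) (j, b) = zmod"
  by (simp add: coprod_def)

lemma coprod_cmp_eq: "cmp (coprod I Cf) (i, a) (i, b) (i, c) g f = cmp (Cf i) a b c g f"
  by (simp add: coprod_def)

lemma coprod_cmp_through_other: "j \<noteq> i \<Longrightarrow> cmp (coprod I Cf) (i, a) (j, b) (i, c) g f = zero (homm (Cf i) a c)"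
  by (simp add: coprod_def)

lemma coprod_cmp_ne: "i \<noteq> k \<Longrightarrow> cmp (coprod I Cf) (i, a) (j, b) (k, c) g f = undefined"
  by (auto simp: coprod_def)

lemma coprod_cmp_closed:
  assumes Li: "lincat R (Cf i)" and a: "a \<in> ob (Cf i)" and b: "b \<in> ob (Cf j)" and x: "x \<in> ob (Cf d)"
    and f: "f \<in> carrier (homm (coprod I Cf) (i, a) (j, b))" and g: "g \<in> carrier (homm (coprod I Cf) (j, b) (d, x))"
  shows "cmp (coprod I Cf) (i, a) (j, b) (d, x) g f \<in> carrier (homm (coprod I Cf) (i, a) (d, x))"
  using assms
  by (cases "d = i"; cases "j = i")
     (simp_all add: coprod_homm_eq coprod_homm_ne coprod_cmp_eq coprod_cmp_through_other coprod_cmp_ne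
       zmod_simps lincat_cmp_closed lincat_zero_closed)

lemma coprod_ide_left:
  assumes Lj: "lincat R (Cf j)" and b: "b \<in> ob (Cf j)" and a: "a \<in> ob (Cf i)"
    and f: "f \<in> carrier (homm (coprod I Cf) (i, a) (j, b))"
  shows "cmp (coprod I Cf) (i, a) (j, b) (j, b) (ide (coprod I Cf) (j, b)) f = f"
  using assms
  by (cases "j = i") (simp_all add: coprod_homm_eq coprod_homm_ne coprod_cmp_eq coprod_cmp_ne
      coprod_ide zmod_simps lincat_ide_left)

lemma coprod_ide_right:
  assumes Li: "lincat R (Cf i)" and a: "a \<in> ob (Cf i)" and b: "b \<in> ob (Cf j)"
    and f: "f \<in> carrier (homm (coprod I Cf) (i, a) (j, b))"
  shows "cmp (coprod I Cf) (i, a) (i, a) (j, b) f (ide (coprod I Cf) (i, a)) = f"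
  using assms
  by (cases "j = i") (simp_all add: coprod_homm_eq coprod_homm_ne coprod_cmp_eq coprod_cmp_ne
      coprod_ide zmod_simps lincat_ide_right)

lemma coprod_cmp_assoc:
  assumes Li: "lincat R (Cf i)" and a: "a \<in> ob (Cf i)" and b: "b \<in> ob (Cf j)"
    and x: "x \<in> ob (Cf d)" and y: "y \<in> ob (Cf e)"
    and f: "f \<in> carrier (homm (coprod I Cf) (i, a) (j, b))" and g: "g \<in> carrier (homm (coprod I Cf) (j, b) (d, x))"
    and h: "h \<in> carrier (homm (coprod I Cf) (d, x) (e, y))"
  shows "cmp (coprod I Cf) (i, a) (d, x) (e, y) h (cmp (coprod I Cf) (i, a) (j, b) (d, x) g f) =
         cmp (coprod I Cf) (i, a) (j, b) (e, y) (cmp (coprod I Cf) (j, b) (d, x) (e, y) h g) f"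
proof -
  consider "j = i" "d = i" "e = i" | "e \<noteq> i" | "e = i" "j = i" "d \<noteq> i" | "e = i" "j \<noteq> i" "d = i"
    | "e = i" "j \<noteq> i" "d \<noteq> i"
    by blast
  then show ?thesis
  proof cases
    case 1
    then show ?thesis using Li a b x y f g h by (simp add: coprod_homm_eq coprod_cmp_eq lincat_cmp_assoc)
  next
    case 3
    then show ?thesis using Li a b y f
      by (simp add: coprod_homm_eq coprod_cmp_eq coprod_cmp_through_other lincat_cmp_zero_left)
  next
    case 4
    then show ?thesis using Li a x y h
      by (simp add: coprod_homm_eq coprod_cmp_eq coprod_cmp_through_other lincat_cmp_zero_right)
  qed (simp_all add: coprod_cmp_ne coprod_cmp_through_other)
qed

lemma coprod_cmp_add:
  assumes Li: "lincat R (Cf i)" and a: "a \<in> ob (Cf i)" and b: "b \<in> ob (Cf j)" and x: "x \<in> ob (Cf d)"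
    and f: "f \<in> carrier (homm (coprod I Cf) (i, a) (j, b))" "f' \<in> carrier (homm (coprod I Cf) (i, a) (j, b))"
    and g: "g \<in> carrier (homm (coprod I Cf) (j, b) (d, x))" "g' \<in> carrier (homm (coprod I Cf) (j, b) (d, x))"
  shows "cmp (coprod I Cf) (i, a) (j, b) (d, x) (add (homm (coprod I Cf) (j, b) (d, x)) g g') f =
           add (homm (coprod I Cf) (i, a) (d, x)) (cmp (coprod I Cf) (i, a) (j, b) (d, x) g f)
             (cmp (coprod I Cf) (i, a) (j, b) (d, x) g' f)" (is ?left)
    and "cmp (coprod I Cf) (i, a) (j, b) (d, x) g (add (homm (coprod I Cf) (i, a) (j, b)) f f') =
           add (homm (coprod I Cf) (i, a) (d, x)) (cmp (coprod I Cf) (i, a) (j, b) (d, x) g f)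
             (cmp (coprod I Cf) (i, a) (j, b) (d, x) g f')" (is ?right)
proof -
  have zero: "d = i \<Longrightarrow>
      add (homm (Cf i) a x) (zero (homm (Cf i) a x)) (zero (homm (Cf i) a x)) = zero (homm (Cf i) a x)"
    using lincat_zero_closed[OF Li a] abelian_monoid.l_zero[OF lincat_hom_abelian_monoid[OF Li a]] x by simp
  have cases: "j = i \<and> d = i \<or> d = i \<and> j \<noteq> i \<or> d \<noteq> i" by blast
  show ?left ?right
    using cases zero Li a b x f g
    by (elim disjE conjE; simp add: coprod_homm_eq coprod_homm_ne coprod_cmp_eq coprod_cmp_through_other
          coprod_cmp_ne zmod_simps lincat_cmp_add_left lincat_cmp_add_right)+
qed

lemma coprod_cmp_smult:
  assumes Li: "lincat R (Cf i)" and a: "a \<in> ob (Cf i)" and b: "b \<in> ob (Cf j)" and x: "x \<in> ob (Cf d)"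
    and f: "f \<in> carrier (homm (coprod I Cf) (i, a) (j, b))" and g: "g \<in> carrier (homm (coprod I Cf) (j, b) (d, x))"
    and r: "r \<in> carrier R"
  shows "cmp (coprod I Cf) (i, a) (j, b) (d, x) (smult (homm (coprod I Cf) (j, b) (d, x)) r g) f =
           smult (homm (coprod I Cf) (i, a) (d, x)) r (cmp (coprod I Cf) (i, a) (j, b) (d, x) g f)" (is ?left)
    and "cmp (coprod I Cf) (i, a) (j, b) (d, x) g (smult (homm (coprod I Cf) (i, a) (j, b)) r f) =
           smult (homm (coprod I Cf) (i, a) (d, x)) r (cmp (coprod I Cf) (i, a) (j, b) (d, x) g f)" (is ?right)
proof -
  have zero: "d = i \<Longrightarrow> smult (homm (Cf i) a x) r (zero (homm (Cf i) a x)) = zero (homm (Cf i) a x)"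
    using module.smult_r_null[OF lincat_hom_module[OF Li a] r] x by simp
  have cases: "j = i \<and> d = i \<or> d = i \<and> j \<noteq> i \<or> d \<noteq> i" by blast
  show ?left ?right
    using cases zero Li a b x f g r
    by (elim disjE conjE; simp add: coprod_homm_eq coprod_homm_ne coprod_cmp_eq coprod_cmp_through_other
          coprod_cmp_ne zmod_simps lincat_cmp_smult_left lincat_cmp_smult_right)+
qed

lemma lincat_coprod:
  assumes R: "cring R" and L: "\<forall>i\<in>I. lincat R (Cf i)"
  shows "lincat R (coprod I Cf)"
  unfolding lincat_def coprod_ob split_paired_Ball_Sigma
  apply (intro conjI ballI)
  subgoal by (rule R)
  subgoal using L by (auto simp: coprod_homm lincat_hom_module module_zmod[OF R])
  subgoal using L by (auto simp: coprod_homm coprod_ide lincat_ide_closed)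
  subgoal by (rule coprod_cmp_closed[where R=R]) (simp_all add: L)
  subgoal by (rule coprod_cmp_assoc[where R=R]) (simp_all add: L)
  subgoal by (rule coprod_ide_left[where R=R]) (simp_all add: L)
  subgoal by (rule coprod_ide_right[where R=R]) (simp_all add: L)
  subgoal by (rule coprod_cmp_add(1)[where R=R]) (simp_all add: L)
  subgoal by (rule coprod_cmp_add(2)[where R=R]) (simp_all add: L)
  subgoal by (rule coprod_cmp_smult(1)) (simp_all add: L)
  subgoal by (rule coprod_cmp_smult(2)) (simp_all add: L)
  done

section \<open>Equivalences from fully faithful functors\<close>

lemma nat_iso_cong:
  assumes "nat_iso C D F G \<eta>" and "\<And>A. A \<in> ob C \<Longrightarrow> fo G' A = fo G A"
    and "\<And>A B f. A \<in> ob C \<Longrightarrow> B \<in> ob C \<Longrightarrow> f \<in> carrier (homm C A B) \<Longrightarrow> fm G' A B f = fm G A B f"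
  shows "nat_iso C D F G' \<eta>"
  using assms unfolding nat_iso_def by simp

lemma nat_iso_ide:
  assumes "lincat R D" and "\<And>X. X \<in> ob D \<Longrightarrow> fo K X = X"
    and "\<And>X Y f. X \<in> ob D \<Longrightarrow> Y \<in> ob D \<Longrightarrow> f \<in> carrier (homm D X Y) \<Longrightarrow> fm K X Y f = f"
  shows "nat_iso D D fid K (ide D)"
  using assms lincat_ide_closed[OF assms(1)] lincat_ide_left[OF assms(1)] lincat_ide_right[OF assms(1)]
  unfolding nat_iso_def fid_def by auto

definition conj_functor :: "('o, 'r, 'm) lincat \<Rightarrow> ('o \<Rightarrow> 'o) \<Rightarrow> ('o \<Rightarrow> 'm) \<Rightarrow> ('o \<Rightarrow> 'm)
    \<Rightarrow> ('o, 'm, 'o, 'm) lfunctor" where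
  "conj_functor C Q e e' = \<lparr>fo = Q, fm = (\<lambda>A B f. cmp C (Q A) A (Q B) (cmp C A B (Q B) (e B) f) (e' A))\<rparr>"

locale ob_iso_family =
  fixes R :: "('r, 'x) ring_scheme" and C :: "('o, 'r, 'm) lincat" and Q :: "'o \<Rightarrow> 'o"
    and e e' :: "'o \<Rightarrow> 'm"
  assumes lincat_C: "lincat R C"
    and Q_ob: "\<And>A. A \<in> ob C \<Longrightarrow> Q A \<in> ob C"
    and e_hom: "\<And>A. A \<in> ob C \<Longrightarrow> e A \<in> carrier (homm C A (Q A))"
    and e'_hom: "\<And>A. A \<in> ob C \<Longrightarrow> e' A \<in> carrier (homm C (Q A) A)"
    and e'_e: "\<And>A. A \<in> ob C \<Longrightarrow> cmp C A (Q A) A (e' A) (e A) = ide C A"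
    and e_e': "\<And>A. A \<in> ob C \<Longrightarrow> cmp C (Q A) A (Q A) (e A) (e' A) = ide C (Q A)"
begin

abbreviation "Conj \<equiv> conj_functor C Q e e'"

lemma conj_fo: "fo Conj A = Q A"
  by (simp add: conj_functor_def)

lemma conj_fm: "fm Conj A B f = cmp C (Q A) A (Q B) (cmp C A B (Q B) (e B) f) (e' A)"
  by (simp add: conj_functor_def)

lemma conj_hom_closed:
  "A \<in> ob C \<Longrightarrow> B \<in> ob C \<Longrightarrow> f \<in> carrier (homm C A B) \<Longrightarrow> fm Conj A B f \<in> carrier (homm C (Q A) (Q B))"
  unfolding conj_fm by (intro lincat_cmp_closed[OF lincat_C] Q_ob e_hom e'_hom)

lemma conj_cmp:
  assumes A: "A \<in> ob C" and B: "B \<in> ob C" and E: "E \<in> ob C"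
    and f: "f \<in> carrier (homm C A B)" and g: "g \<in> carrier (homm C B E)"
  shows "fm Conj A E (cmp C A B E g f) = cmp C (Q A) (Q B) (Q E) (fm Conj B E g) (fm Conj A B f)"
proof -
  let ?u = "cmp C B E (Q E) (e E) g" and ?v = "cmp C A B (Q B) (e B) f"
  have u: "?u \<in> carrier (homm C B (Q E))" by (rule lincat_cmp_closed[OF lincat_C B E Q_ob[OF E] g e_hom[OF E]])
  have v: "?v \<in> carrier (homm C A (Q B))" by (rule lincat_cmp_closed[OF lincat_C A B Q_ob[OF B] f e_hom[OF B]])
  have ue: "cmp C (Q B) B (Q E) ?u (e' B) \<in> carrier (homm C (Q B) (Q E))"
    by (rule lincat_cmp_closed[OF lincat_C Q_ob[OF B] B Q_ob[OF E] e'_hom[OF B] u])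
  have "cmp C (Q A) (Q B) (Q E) (fm Conj B E g) (fm Conj A B f)
      = cmp C (Q A) A (Q E) (cmp C A (Q B) (Q E) (cmp C (Q B) B (Q E) ?u (e' B)) ?v) (e' A)"
    unfolding conj_fm by (rule lincat_cmp_assoc[OF lincat_C Q_ob[OF A] A Q_ob[OF B] Q_ob[OF E] e'_hom[OF A] v ue])
  also have "cmp C A (Q B) (Q E) (cmp C (Q B) B (Q E) ?u (e' B)) ?v
      = cmp C A B (Q E) ?u (cmp C A (Q B) B (e' B) ?v)"
    by (rule lincat_cmp_assoc[OF lincat_C A Q_ob[OF B] B Q_ob[OF E] v e'_hom[OF B] u, symmetric])
  also have "cmp C A (Q B) B (e' B) ?v = cmp C A B B (cmp C B (Q B) B (e' B) (e B)) f"
    by (rule lincat_cmp_assoc[OF lincat_C A B Q_ob[OF B] B f e_hom[OF B] e'_hom[OF B]])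
  also have "\<dots> = f" unfolding e'_e[OF B] by (rule lincat_ide_left[OF lincat_C A B f])
  also have "cmp C A B (Q E) ?u f = cmp C A E (Q E) (e E) (cmp C A B E g f)"
    by (rule lincat_cmp_assoc[OF lincat_C A B E Q_ob[OF E] f g e_hom[OF E], symmetric])
  finally show ?thesis unfolding conj_fm ..
qed

lemma lin_functor_conj: "lin_functor R C C Conj"
  unfolding lin_functor_def
proof (intro conjI ballI)
  fix A assume A: "A \<in> ob C"
  show "fo Conj A \<in> ob C" by (simp add: conj_functor_def Q_ob[OF A])
  show "fm Conj A A (ide C A) = ide C (fo Conj A)"
    using lincat_ide_right[OF lincat_C A Q_ob[OF A] e_hom[OF A]] e_e'[OF A] by (simp add: conj_functor_def)
next
  fix A B f f' assume A: "A \<in> ob C" and B: "B \<in> ob C" and f: "f \<in> carrier (homm C A B)"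
    and f': "f' \<in> carrier (homm C A B)"
  show "fm Conj A B (add (homm C A B) f f') = add (homm C (fo Conj A) (fo Conj B)) (fm
      Conj A B f) (fm Conj A B f')"
    using lincat_cmp_add_right[OF lincat_C A B Q_ob[OF B] f f' e_hom[OF B]]
      lincat_cmp_add_left[OF lincat_C Q_ob[OF A] A Q_ob[OF B] e'_hom[OF A]
        lincat_cmp_closed[OF lincat_C A B Q_ob[OF B] f e_hom[OF B]] lincat_cmp_closed[OF lincat_C A
            B Q_ob[OF B] f' e_hom[OF B]]]
    by (simp add: conj_functor_def)
next
  fix A B f r assume A: "A \<in> ob C" and B: "B \<in> ob C" and f: "f \<in> carrier (homm C A B)" and r: "r \<in> carrier R"
  show "fm Conj A B (smult (homm C A B) r f) = smult (homm C (fo Conj A) (fo Conj B)) r (fm Conj A B f)"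
    using lincat_cmp_smult_right[OF lincat_C A B Q_ob[OF B] f e_hom[OF B] r]
      lincat_cmp_smult_left[OF lincat_C Q_ob[OF A] A Q_ob[OF B] e'_hom[OF A]
        lincat_cmp_closed[OF lincat_C A B Q_ob[OF B] f e_hom[OF B]] r]
    by (simp add: conj_functor_def)
qed (simp_all add: conj_fo conj_hom_closed conj_cmp)

lemma nat_iso_conj: "nat_iso C C fid Conj e"
  unfolding nat_iso_def
proof (intro conjI ballI)
  fix A assume A: "A \<in> ob C"
  show "e A \<in> carrier (homm C (fo fid A) (fo Conj A))"
    using e_hom[OF A] by (simp add: fid_def conj_functor_def)
  show "\<exists>\<theta>\<in>carrier (homm C (fo Conj A) (fo fid A)). cmp C (fo fid A) (fo Conj A) (fo fid A)
      \<theta> (e A) = ide C (fo fid A)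
      \<and> cmp C (fo Conj A) (fo fid A) (fo Conj A) (e A) \<theta> = ide C (fo Conj A)"
    using e'_hom[OF A] e'_e[OF A] e_e'[OF A] by (auto simp: fid_def conj_functor_def)
next
  fix A B f assume A: "A \<in> ob C" and B: "B \<in> ob C" and f: "f \<in> carrier (homm C A B)"
  have ef: "cmp C A B (Q B) (e B) f \<in> carrier (homm C A (Q B))"
    by (rule lincat_cmp_closed[OF lincat_C A B Q_ob[OF B] f e_hom[OF B]])
  have "cmp C A (Q A) (Q B) (fm Conj A B f) (e A) = cmp C A A (Q B) (cmp C A B (Q B) (e B) f) (cmp
      C A (Q A) A (e' A) (e A))"
    unfolding conj_fm by (rule lincat_cmp_assoc[OF lincat_C A Q_ob[OF A] A Q_ob[OF B] e_hom[OF A]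
        e'_hom[OF A] ef, symmetric])
  also have "\<dots> = cmp C A B (Q B) (e B) f"
    unfolding e'_e[OF A] by (rule lincat_ide_right[OF lincat_C A Q_ob[OF B] ef])
  finally show "cmp C (fo fid A) (fo Conj A) (fo Conj B) (fm Conj A B f) (e A)
      = cmp C (fo fid A) (fo fid B) (fo Conj B) (e B) (fm fid A B f)"
    by (simp add: fid_def conj_functor_def)
qed

end

definition lift_functor :: "('o2, 'r, 'm2) lincat \<Rightarrow> ('o2, 'm2, 'o1, 'm1) lfunctor \<Rightarrow> ('o1 \<Rightarrow> 'o2)
    \<Rightarrow> ('o1, 'm1, 'o1, 'm1) lfunctor \<Rightarrow> ('o1, 'm1, 'o2, 'm2) lfunctor" where
  "lift_functor D J P F = \<lparr>fo = P,
     fm = (\<lambda>A B f. SOME d. d \<in> carrier (homm D (P A) (P B)) \<and> fm J (P A) (P B) d = fm F A B f)\<rparr>"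

locale fully_faithful =
  fixes R :: "('r, 'x) ring_scheme" and C :: "('o1, 'r, 'm1) lincat" and D :: "('o2, 'r, 'm2) lincat"
    and J :: "('o2, 'm2, 'o1, 'm1) lfunctor"
  assumes lincat_C: "lincat R C" and lincat_D: "lincat R D" and functor_J: "lin_functor R D C J"
    and faithful: "\<And>X Y. X \<in> ob D \<Longrightarrow> Y \<in> ob D \<Longrightarrow> inj_on (fm J X Y) (carrier (homm D X Y))"
    and full: "\<And>X Y h. X \<in> ob D \<Longrightarrow> Y \<in> ob D \<Longrightarrow> h \<in> carrier (homm C (fo J X) (fo J Y)) \<Longrightarrow>
      \<exists>d\<in>carrier (homm D X Y). fm J X Y d = h"
begin

context
  fixes P :: "'o1 \<Rightarrow> 'o2" and F :: "('o1, 'm1, 'o1, 'm1) lfunctor"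
  assumes functor_F: "lin_functor R C C F"
    and P_ob: "\<And>A. A \<in> ob C \<Longrightarrow> P A \<in> ob D"
    and F_ob: "\<And>A. A \<in> ob C \<Longrightarrow> fo F A = fo J (P A)"
begin

abbreviation "Lift \<equiv> lift_functor D J P F"

lemma lift_fo: "fo Lift A = P A"
  by (simp add: lift_functor_def)

lemma lift_fm:
  assumes "A \<in> ob C" "B \<in> ob C" "f \<in> carrier (homm C A B)"
  shows "fm Lift A B f \<in> carrier (homm D (P A) (P B))" and "fm J (P A) (P B) (fm Lift A B f) = fm F A B f"
proof -
  have "\<exists>d. d \<in> carrier (homm D (P A) (P B)) \<and> fm J (P A) (P B) d = fm F A B f"
    using full[OF P_ob[OF assms(1)] P_ob[OF assms(2)], of "fm F A B f"] lin_functor_hom[OF functor_F assms]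
      F_ob[OF assms(1)] F_ob[OF assms(2)] by auto
  from someI_ex[OF this] show "fm Lift A B f \<in> carrier (homm D (P A) (P B))"
    and "fm J (P A) (P B) (fm Lift A B f) = fm F A B f"
    by (simp_all add: lift_functor_def)
qed

lemma lift_fm_eqI:
  assumes "A \<in> ob C" "B \<in> ob C" "f \<in> carrier (homm C A B)" "d \<in> carrier (homm D (P A) (P B))"
    and "fm J (P A) (P B) d = fm F A B f"
  shows "fm Lift A B f = d"
  by (rule inj_onD[OF faithful[OF P_ob[OF assms(1)] P_ob[OF assms(2)]]]) (use lift_fm[OF
      assms(1-3)] assms(4,5) in simp_all)

lemma lin_functor_lift: "lin_functor R C D Lift"
  unfolding lin_functor_def lift_fo
proof (intro conjI ballI)
  fix A assume A: "A \<in> ob C"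
  show "P A \<in> ob D" by (rule P_ob[OF A])
  show "fm Lift A A (ide C A) = ide D (P A)"
    using lin_functor_ide[OF functor_F A] lin_functor_ide[OF functor_J P_ob[OF A]] F_ob[OF A]
    by (intro lift_fm_eqI[OF A A lincat_ide_closed[OF lincat_C A] lincat_ide_closed[OF lincat_D P_ob[OF A]]]) simp
next
  fix A B f assume A: "A \<in> ob C" and B: "B \<in> ob C" and f: "f \<in> carrier (homm C A B)"
  show "fm Lift A B f \<in> carrier (homm D (P A) (P B))" by (rule lift_fm(1)[OF A B f])
next
  fix A B f f' assume A: "A \<in> ob C" and B: "B \<in> ob C" and f: "f \<in> carrier (homm C A B)"
    and f': "f' \<in> carrier (homm C A B)"
  note Lf = lift_fm[OF A B f] and Lf' = lift_fm[OF A B f']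
  show "fm Lift A B (add (homm C A B) f f') = add (homm D (P A) (P B)) (fm Lift A B f) (fm Lift A B f')"
    using lin_functor_add[OF functor_J P_ob[OF A] P_ob[OF B] Lf(1) Lf'(1)] lin_functor_add[OF functor_F A B f f']
      Lf(2) Lf'(2) F_ob[OF A] F_ob[OF B]
    by (intro lift_fm_eqI[OF A B abelian_monoid.a_closed[OF lincat_hom_abelian_monoid[OF lincat_C A B] f f']
          abelian_monoid.a_closed[OF lincat_hom_abelian_monoid[OF lincat_D P_ob[OF A]
              P_ob[OF B]] Lf(1) Lf'(1)]]) simp
next
  fix A B f r assume A: "A \<in> ob C" and B: "B \<in> ob C" and f: "f \<in> carrier (homm C A B)" and r: "r \<in> carrier R"
  note Lf = lift_fm[OF A B f]
  show "fm Lift A B (smult (homm C A B) r f) = smult (homm D (P A) (P B)) r (fm Lift A B f)"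
    using lin_functor_smult[OF functor_J P_ob[OF A] P_ob[OF B] Lf(1) r] lin_functor_smult[OF functor_F A B f r]
      Lf(2) F_ob[OF A] F_ob[OF B]
    by (intro lift_fm_eqI[OF A B module.smult_closed[OF lincat_hom_module[OF lincat_C A B] r f]
          module.smult_closed[OF lincat_hom_module[OF lincat_D P_ob[OF A] P_ob[OF B]] r Lf(1)]]) simp
next
  fix A B E f g assume A: "A \<in> ob C" and B: "B \<in> ob C" and E: "E \<in> ob C"
    and f: "f \<in> carrier (homm C A B)" and g: "g \<in> carrier (homm C B E)"
  note Lf = lift_fm[OF A B f] and Lg = lift_fm[OF B E g]
  show "fm Lift A E (cmp C A B E g f) = cmp D (P A) (P B) (P E) (fm Lift B E g) (fm Lift A B f)"
    using lin_functor_cmp[OF functor_J P_ob[OF A] P_ob[OF B] P_ob[OF E] Lf(1) Lg(1)]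
      lin_functor_cmp[OF functor_F A B E f g] Lf(2) Lg(2) F_ob[OF A] F_ob[OF B] F_ob[OF E]
    by (intro lift_fm_eqI[OF A E lincat_cmp_closed[OF lincat_C A B E f g]
          lincat_cmp_closed[OF lincat_D P_ob[OF A] P_ob[OF B] P_ob[OF E] Lf(1) Lg(1)]]) simp
qed

end

theorem lincat_equivI:
  fixes P :: "'o1 \<Rightarrow> 'o2" and e e' :: "'o1 \<Rightarrow> 'm1"
  assumes P_ob: "\<And>A. A \<in> ob C \<Longrightarrow> P A \<in> ob D"
    and isos: "ob_iso_family R C (\<lambda>A. fo J (P A)) e e'"
    and P_J: "\<And>X. X \<in> ob D \<Longrightarrow> P (fo J X) = X"
    and e_J: "\<And>X. X \<in> ob D \<Longrightarrow> e (fo J X) = ide C (fo J X)"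
  shows "lincat_equiv R C D"
proof -
  interpret ob_iso_family R C "\<lambda>A. fo J (P A)" e e' by (rule isos)
  let ?L = "lift_functor D J P Conj"
  note lift = lift_fm[OF lin_functor_conj P_ob conj_fo] lift_fo[OF lin_functor_conj P_ob conj_fo]
  have "nat_iso C C fid (fcomp J ?L) e"
    by (rule nat_iso_cong[OF nat_iso_conj]) (simp_all add: fcomp_def lift conj_fo)
  moreover have "nat_iso D D fid (fcomp ?L J) (ide D)"
  proof (rule nat_iso_ide[OF lincat_D])
    fix X Y f assume X: "X \<in> ob D" and Y: "Y \<in> ob D" and f: "f \<in> carrier (homm D X Y)"
    have JX: "fo J X \<in> ob C" and JY: "fo J Y \<in> ob C" by (rule lin_functor_ob[OF functor_J X], rule
        lin_functor_ob[OF functor_J Y])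
    have Jf: "fm J X Y f \<in> carrier (homm C (fo J X) (fo J Y))" by (rule lin_functor_hom[OF functor_J X Y f])
    have e'_J: "e' (fo J X) = ide C (fo J X)"
      using e'_e[OF JX] e'_hom[OF JX] lincat_ide_right[OF lincat_C JX JX] e_J[OF X] P_J[OF X] by simp
    have "fm Conj (fo J X) (fo J Y) (fm J X Y f) = fm J X Y f"
      using lincat_ide_left[OF lincat_C JX JY Jf] lincat_ide_right[OF lincat_C JX JY Jf] Jf
      by (simp add: conj_fm P_J X Y e_J e'_J)
    then show "fm (fcomp ?L J) X Y f = f"
      using lift_fm_eqI[OF lin_functor_conj P_ob conj_fo JX JY Jf] f P_J[OF X] P_J[OF Y]
          by (simp add: fcomp_def lift)
  qed (simp add: fcomp_def lift P_J)
  ultimately show ?thesis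
    unfolding lincat_equiv_def
    using lincat_C lincat_D functor_J lin_functor_lift[OF lin_functor_conj P_ob conj_fo] by blast
qed

end

section \<open>Decomposition along orbits\<close>

locale orbit_decomposition = group G
  for G :: "('g, 'y) monoid_scheme" (structure) +
  fixes R :: "('r, 'x) ring_scheme" and Z :: "'z set" and \<phi> :: "'g \<Rightarrow> 'z \<Rightarrow> 'z"
    and Af :: "'z \<Rightarrow> ('o, 'r, 'm) lincat" and \<alpha> :: "'g \<Rightarrow> ('z \<times> 'o, 'm, 'z \<times> 'o, 'm) lfunctor"
    and T :: "'z set"
  assumes cring_R: "cring R" and action: "group_action G Z \<phi>"
    and lincat_Af: "\<forall>z\<in>Z. lincat R (Af z)"
    and lincat_action_\<alpha>: "lincat_action R G (coprod Z Af) \<alpha>"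
    and fibres: "\<forall>g\<in>carrier G. \<forall>z\<in>Z. (\<forall>a\<in>ob (Af z). fst (fo (\<alpha> g) (z, a)) = \<phi> g z)
                              \<and> lin_iso R (Af z) (Af (\<phi> g z)) (restr \<alpha> z g)"
    and T_sub: "T \<subseteq> Z"
    and T_reps: "\<forall>z\<in>Z. \<exists>!t. t \<in> T \<and> t \<in> orbit G \<phi> z"
begin

abbreviation "Acat \<equiv> coprod Z Af"
abbreviation "stab t \<equiv> stabilizer G \<phi> t"
abbreviation "AxG \<equiv> cross G (carrier G) Acat \<alpha>"
abbreviation "Decomp \<equiv> coprod T (\<lambda>z. cross G (stab z) (Af z) (restr \<alpha> z))"

lemma lincat_Acat: "lincat R Acat"
  by (rule lincat_coprod[OF cring_R lincat_Af])

lemma act_functor: "g \<in> carrier G \<Longrightarrow> lin_functor R Acat Acat (\<alpha> g)"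
  using lincat_action_\<alpha> by (simp add: lincat_action_def)

lemma act_one_ob: "A \<in> ob Acat \<Longrightarrow> fo (\<alpha> \<one>) A = A"
  using lincat_action_\<alpha> by (simp add: lincat_action_def)

lemma act_one_hom: "A \<in> ob Acat \<Longrightarrow> B \<in> ob Acat \<Longrightarrow> f \<in> carrier (homm Acat A B) \<Longrightarrow> fm (\<alpha> \<one>) A B f = f"
  using lincat_action_\<alpha> by (simp add: lincat_action_def)

lemma act_mult_ob:
  "g \<in> carrier G \<Longrightarrow> h \<in> carrier G \<Longrightarrow> A \<in> ob Acat \<Longrightarrow> fo (\<alpha> (g \<otimes> h)) A = fo (\<alpha> g) (fo (\<alpha> h) A)"
  using lincat_action_\<alpha> by (simp add: lincat_action_def)

lemma act_mult_hom: "g \<in> carrier G \<Longrightarrow> h \<in> carrier G \<Longrightarrow> A \<in> ob Acat \<Longrightarrow> B \<in> ob Acat \<Longrightarrow> f \<in> carrier (homm Acat A B)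
    \<Longrightarrow>
    fm (\<alpha> (g \<otimes> h)) A B f = fm (\<alpha> g) (fo (\<alpha> h) A) (fo (\<alpha> h) B) (fm (\<alpha> h) A B f)"
  using lincat_action_\<alpha> by (simp add: lincat_action_def)

lemma act_ob_Acat: "k \<in> carrier G \<Longrightarrow> A \<in> ob Acat \<Longrightarrow> fo (\<alpha> k) A \<in> ob Acat"
  by (rule lin_functor_ob[OF act_functor])

lemma act_inv_act: "g \<in> carrier G \<Longrightarrow> A \<in> ob Acat \<Longrightarrow> fo (\<alpha> (inv g)) (fo (\<alpha> g) A) = A"
  using act_mult_ob[of "inv g" g A] act_one_ob[of A] by simp

lemma cross_setting_G: "cross_setting G (carrier G) R Acat \<alpha>"
proof (rule cross_setting.intro[OF is_group subgroup_self], rule cross_setting_axioms.intro)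
qed (fact lincat_Acat act_functor act_one_ob act_one_hom act_mult_ob act_mult_hom)+

lemma lincat_AxG: "lincat R AxG"
  by (rule cross_setting.lincat_cross[OF cross_setting_G])

lemma ob_Acat: "(z, a) \<in> ob Acat \<longleftrightarrow> z \<in> Z \<and> a \<in> ob (Af z)"
  by (simp add: coprod_ob)

lemma ob_Acat_cases:
  assumes "A \<in> ob Acat" obtains z a where "A = (z, a)" "z \<in> Z" "a \<in> ob (Af z)"
  using assms by (cases A) (auto simp: ob_Acat)

lemma act_pair: "g \<in> carrier G \<Longrightarrow> z \<in> Z \<Longrightarrow> a \<in> ob (Af z) \<Longrightarrow> fo (\<alpha> g) (z, a) = (\<phi> g z, fo (restr \<alpha> z g) a)"
  using fibres by (simp add: restr_def prod_eq_iff)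

lemma restr_functor: "g \<in> carrier G \<Longrightarrow> z \<in> Z \<Longrightarrow> lin_functor R (Af z) (Af (\<phi> g z)) (restr \<alpha> z g)"
  using fibres by (simp add: lin_iso_def)

lemma restr_ob: "g \<in> carrier G \<Longrightarrow> z \<in> Z \<Longrightarrow> a \<in> ob (Af z) \<Longrightarrow> fo (restr \<alpha> z g) a \<in> ob (Af (\<phi> g z))"
  by (rule lin_functor_ob[OF restr_functor])

lemma restr_fo: "fo (restr \<alpha> z g) a = snd (fo (\<alpha> g) (z, a))"
  by (simp add: restr_def)

lemma restr_fm: "fm (restr \<alpha> z g) a b f = fm (\<alpha> g) (z, a) (z, b) f"
  by (simp add: restr_def)

lemma stab_mem: "g \<in> stab t \<longleftrightarrow> g \<in> carrier G \<and> \<phi> g t = t"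
  by (simp add: stabilizer_def)

lemma act_stab_pair: "t \<in> Z \<Longrightarrow> k \<in> stab t \<Longrightarrow> a \<in> ob (Af t) \<Longrightarrow> fo (\<alpha> k) (t, a) = (t, fo (restr \<alpha> t k) a)"
  using act_pair[of k t a] by (simp add: stab_mem)

lemma cross_setting_stab:
  assumes t: "t \<in> Z"
  shows "cross_setting G (stab t) R (Af t) (restr \<alpha> t)"
proof (rule cross_setting.intro[OF is_group group_action.stabilizer_subgroup[OF action t]],
    rule cross_setting_axioms.intro)
  show "lincat R (Af t)" using lincat_Af t by blast
  fix g assume "g \<in> stab t"
  then show "lin_functor R (Af t) (Af t) (restr \<alpha> t g)" using restr_functor[of g t] t by (simp add: stab_mem)
next
  fix a assume "a \<in> ob (Af t)"
  then show "fo (restr \<alpha> t \<one>) a = a"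
    using act_one_ob[of "(t, a)"] t by (simp add: restr_fo ob_Acat)
next
  fix a b f assume "a \<in> ob (Af t)" "b \<in> ob (Af t)" "f \<in> carrier (homm (Af t) a b)"
  then show "fm (restr \<alpha> t \<one>) a b f = f"
    using act_one_hom[of "(t, a)" "(t, b)" f] t by (simp add: restr_fm ob_Acat coprod_homm)
next
  fix g h a assume g: "g \<in> stab t" and h: "h \<in> stab t" and a: "a \<in> ob (Af t)"
  have "fo (restr \<alpha> t (g \<otimes> h)) a = snd (fo (\<alpha> g) (fo (\<alpha> h) (t, a)))"
    using act_mult_ob[of g h "(t, a)"] g h a t by (simp add: restr_fo ob_Acat stab_mem)
  also have "\<dots> = fo (restr \<alpha> t g) (fo (restr \<alpha> t h) a)"
    unfolding act_stab_pair[OF t h a] restr_fo[of t g] ..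
  finally show "fo (restr \<alpha> t (g \<otimes> h)) a = fo (restr \<alpha> t g) (fo (restr \<alpha> t h) a)" .
next
  fix g h a b f assume g: "g \<in> stab t" and h: "h \<in> stab t" and a: "a \<in> ob (Af t)" and b: "b \<in> ob (Af t)"
    and f: "f \<in> carrier (homm (Af t) a b)"
  have "fm (restr \<alpha> t (g \<otimes> h)) a b f = fm (\<alpha> g) (fo (\<alpha> h) (t, a)) (fo (\<alpha> h) (t, b)) (fm (\<alpha> h) (t, a) (t, b) f)"
    using act_mult_hom[of g h "(t, a)" "(t, b)" f] g h a b f t by (simp add: restr_fm ob_Acat coprod_homm stab_mem)
  also have "\<dots> = fm (restr \<alpha> t g) (fo (restr \<alpha> t h) a) (fo (restr \<alpha> t h) b) (fm (restr \<alpha> t h) a b f)"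
    unfolding act_stab_pair[OF t h a] act_stab_pair[OF t h b] restr_fm ..
  finally show "fm (restr \<alpha> t (g \<otimes> h)) a b f =
      fm (restr \<alpha> t g) (fo (restr \<alpha> t h) a) (fo (restr \<alpha> t h) b) (fm (restr \<alpha> t h) a b f)" .
qed

lemma lincat_Decomp: "lincat R Decomp"
  by (rule lincat_coprod[OF cring_R]) (use cross_setting.lincat_cross[OF cross_setting_stab] T_sub in blast)

lemma T_same_orbit_eq:
  assumes "t \<in> T" "t' \<in> T" "g \<in> carrier G" "\<phi> g t = t'"
  shows "t = t'"
proof -
  have tZ: "t \<in> Z" using assms T_sub by blast
  have "t \<in> orbit G \<phi> t" by (rule group_action.orbit_refl[OF action tZ])
  moreover have "t' \<in> orbit G \<phi> t" using assms by (auto simp: orbit_def)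
  ultimately show ?thesis using T_reps tZ assms by blast
qed

definition orbit_rep :: "'z \<Rightarrow> 'z" where
  "orbit_rep z = (THE t. t \<in> T \<and> t \<in> orbit G \<phi> z)"

text \<open>On representatives rep_elt is \<one>, so that the isomorphism to_rep below is an identity on the
  image of the inclusion.\<close>

definition rep_elt :: "'z \<Rightarrow> 'g" where
  "rep_elt z = (if z \<in> T then \<one> else (SOME g. g \<in> carrier G \<and> \<phi> g z = orbit_rep z))"

lemma orbit_rep_in_T: "z \<in> Z \<Longrightarrow> orbit_rep z \<in> T"
  and orbit_rep_in_orbit: "z \<in> Z \<Longrightarrow> orbit_rep z \<in> orbit G \<phi> z"
  unfolding orbit_rep_def by (metis (no_types, lifting) T_reps theI')+

lemma orbit_rep_T: "z \<in> T \<Longrightarrow> orbit_rep z = z"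
  unfolding orbit_rep_def
  by (rule the1_equality) (use T_reps T_sub group_action.orbit_refl[OF action] in blast)+

lemma rep_elt_carrier: "z \<in> Z \<Longrightarrow> rep_elt z \<in> carrier G"
  and rep_elt_moves: "z \<in> Z \<Longrightarrow> \<phi> (rep_elt z) z = orbit_rep z"
proof -
  assume z: "z \<in> Z"
  have "\<exists>g. g \<in> carrier G \<and> \<phi> g z = orbit_rep z" using orbit_rep_in_orbit[OF z] by (auto simp: orbit_def)
  from someI_ex[OF this] show "rep_elt z \<in> carrier G" "\<phi> (rep_elt z) z = orbit_rep z"
    unfolding rep_elt_def using orbit_rep_T group_action.id_eq_one[OF action] z
    by (auto simp: restrict_apply' dest: fun_cong[where x = z])
qed

lemma rep_elt_T: "z \<in> T \<Longrightarrow> rep_elt z = \<one>"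
  by (simp add: rep_elt_def)

definition incl :: "('z \<times> 'o, 'g \<Rightarrow> 'm, 'z \<times> 'o, 'g \<Rightarrow> 'm) lfunctor" where
  "incl = \<lparr>fo = (\<lambda>X. X), fm = (\<lambda>X Y f k. if k \<in> carrier G then
      (if fst X = fst Y \<and> k \<in> stab (fst X) then f k else zero (homm Acat (fo (\<alpha> k) X) Y)) else undefined)\<rparr>"

lemma incl_fo: "fo incl X = X" by (simp add: incl_def)

lemma incl_fm: "fm incl X Y f = (\<lambda>k. if k \<in> carrier G then
      (if fst X = fst Y \<and> k \<in> stab (fst X) then f k else zero (homm Acat (fo (\<alpha> k) X) Y)) else undefined)"
  by (simp add: incl_def)

lemma ob_Decomp: "(t, a) \<in> ob Decomp \<longleftrightarrow> t \<in> T \<and> a \<in> ob (Af t)" by (simp add: coprod_ob cross_simps)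

lemma homm_Decomp_same: "homm Decomp (t, a) (t, b) = cross_hom G (stab t) (Af t) (restr \<alpha> t) a b"
  by (simp add: coprod_homm cross_simps)

lemma homm_Decomp_other: "t \<noteq> t' \<Longrightarrow> homm Decomp (t, a) (t', b) = zmod"
  by (simp add: coprod_homm)

lemma homm_AxG: "homm AxG A B = cross_hom G (carrier G) Acat \<alpha> A B" by (simp add: cross_simps)

lemma ob_AxG: "ob AxG = ob Acat" by (simp add: cross_simps)

lemma stab_carrier: "k \<in> stab t \<Longrightarrow> k \<in> carrier G" by (simp add: stab_mem)

lemma homm_Acat_stab: "t \<in> Z \<Longrightarrow> k \<in> stab t \<Longrightarrow> a \<in> ob (Af t)
    \<Longrightarrow> homm Acat (fo (\<alpha> k) (t, a)) (t, b) = homm (Af t) (fo (restr \<alpha> t k) a) b"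
  by (simp add: act_stab_pair coprod_homm)

lemma homm_Acat_off: "k \<in> carrier G \<Longrightarrow> t \<in> Z \<Longrightarrow> a \<in> ob (Af t) \<Longrightarrow> \<phi> k t \<noteq> t'
    \<Longrightarrow> homm Acat (fo (\<alpha> k) (t, a)) (t', b) = zmod"
  by (simp add: act_pair coprod_homm)

lemma reps_not_conjugate: "t \<in> T \<Longrightarrow> t' \<in> T \<Longrightarrow> t \<noteq> t' \<Longrightarrow> k \<in> carrier G \<Longrightarrow> \<phi> k t \<noteq> t'"
  using T_same_orbit_eq by blast

lemma not_stab_moves: "k \<in> carrier G \<Longrightarrow> k \<notin> stab t \<Longrightarrow> \<phi> k t \<noteq> t"
  by (simp add: stab_mem)

lemma homm_Acat_off_stab: "k \<in> carrier G \<Longrightarrow> k \<notin> stab t \<Longrightarrow> t \<in> Z \<Longrightarrow> a \<in> ob (Af t)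
    \<Longrightarrow> homm Acat (fo (\<alpha> k) (t, a)) (t, b) = zmod"
  by (rule homm_Acat_off[OF _ _ _ not_stab_moves])

lemma hom_AxG_between_reps:
  assumes t: "t \<in> T" "t' \<in> T" "t \<noteq> t'" and a: "a \<in> ob (Af t)"
    and u: "u \<in> carrier (cross_hom G (carrier G) Acat \<alpha> (t, a) (t', b))"
  shows "u = (\<lambda>k. undefined)"
proof
  fix k
  show "u k = undefined"
  proof (cases "k \<in> carrier G")
    case True
    have "u k \<in> carrier (homm Acat (fo (\<alpha> k) (t, a)) (t', b))" by (rule
        cross_setting.cross_hom_in[OF cross_setting_G u True])
    then show ?thesis using homm_Acat_off[OF True _ a reps_not_conjugate[OF t True]] t T_sub
        by (auto simp: zmod_simps)
  next
    case False then show ?thesis by (rule cross_setting.cross_hom_out[OF cross_setting_G u])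
  qed
qed

lemma incl_hom_closed:
  assumes t: "t \<in> T" "t' \<in> T" and a: "a \<in> ob (Af t)" and b: "b \<in> ob (Af t')"
    and f: "f \<in> carrier (homm Decomp (t, a) (t', b))"
  shows "fm incl (t, a) (t', b) f \<in> carrier (cross_hom G (carrier G) Acat \<alpha> (t, a) (t', b))"
proof (rule cross_setting.cross_homI[OF cross_setting_G])
  have tZ: "t \<in> Z" "t' \<in> Z" using t T_sub by auto
  have A: "(t, a) \<in> ob Acat" and B: "(t', b) \<in> ob Acat" using tZ a b by (auto simp: ob_Acat)
  fix k assume k: "k \<in> carrier G"
  show "fm incl (t, a) (t', b) f k \<in> carrier (homm Acat (fo (\<alpha> k) (t, a)) (t', b))"
  proof (cases "t = t' \<and> k \<in> stab t")
    case True
    then have tt: "t' = t" and ks: "k \<in> stab t" by auto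
    have "f \<in> carrier (cross_hom G (stab t) (Af t) (restr \<alpha> t) a b)" using f homm_Decomp_same tt by auto
    then have fk: "f k \<in> carrier (homm (Af t) (fo (restr \<alpha> t k) a) b)" using
        cross_setting.cross_hom_in[OF cross_setting_stab[OF tZ(1)]] ks by blast
    have "fm incl (t, a) (t', b) f k = f k" using k ks tt by (simp add: incl_fm)
    then show ?thesis unfolding tt homm_Acat_stab[OF tZ(1) ks a] using fk tt by simp
  next
    case False
    then show ?thesis using k lincat_zero_closed[OF lincat_Acat act_ob_Acat[OF k A] B] by (auto simp: incl_fm)
  qed
next
  fix k assume "k \<notin> carrier G" then show "fm incl (t, a) (t', b) f k = undefined" by (simp add: incl_fm)
next
  have tZ: "t \<in> Z" "t' \<in> Z" using t T_sub by auto
  show "finite (cross_supp (carrier G) Acat \<alpha> (t, a) (t', b) (fm incl (t, a) (t', b) f))"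
  proof (cases "t = t'")
    case True
    have fX: "f \<in> carrier (cross_hom G (stab t) (Af t) (restr \<alpha> t) a b)" using f True homm_Decomp_same by auto
    have "cross_supp (carrier G) Acat \<alpha> (t, a) (t', b) (fm incl (t, a) (t', b) f)
        \<subseteq> cross_supp (stab t) (Af t) (restr \<alpha> t) a b f"
      using True homm_Acat_stab[OF tZ(1) _ a] by (auto simp: cross_supp_def incl_fm stab_carrier)
    then show ?thesis using cross_setting.finite_supp[OF cross_setting_stab[OF tZ(1)] fX] finite_subset by blast
  next
    case False
    then show ?thesis by (simp add: cross_supp_def incl_fm)
  qed
qed

lemma ob_Decomp_cases: assumes "A \<in> ob Decomp" obtains t a where "A = (t, a)" "t \<in> T" "a \<in> ob (Af t)" "t \<in> Z"
  using assms T_sub by (cases A) (auto simp: ob_Decomp)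

lemma incl_faithful:
  assumes "X \<in> ob Decomp" and "Y \<in> ob Decomp"
  shows "inj_on (fm incl X Y) (carrier (homm Decomp X Y))"
proof -
  obtain t a where X: "X = (t, a)" "t \<in> Z" using assms(1) by (rule ob_Decomp_cases)
  obtain t' b where Y: "Y = (t', b)" using assms(2) by (rule ob_Decomp_cases)
  show ?thesis
  proof (cases "t = t'")
    case True
    show ?thesis
    proof (rule inj_onI)
      fix f f' assume f: "f \<in> carrier (homm Decomp X Y)" and f': "f' \<in> carrier (homm Decomp X Y)"
        and eq: "fm incl X Y f = fm incl X Y f'"
      have "f \<in> carrier (cross_hom G (stab t) (Af t) (restr \<alpha> t) a b)"
        and "f' \<in> carrier (cross_hom G (stab t) (Af t) (restr \<alpha> t) a b)"
        using f f' True X Y homm_Decomp_same by auto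
      note out = this[THEN cross_setting.cross_hom_out[OF cross_setting_stab[OF X(2)]]]
      show "f = f'"
      proof
        fix k
        show "f k = f' k"
          using fun_cong[OF eq, of k] True X Y stab_carrier out
          by (cases "k \<in> stab t") (simp_all add: incl_fm)
      qed
    qed
  next
    case False
    then show ?thesis using X Y by (simp add: homm_Decomp_other zmod_simps)
  qed
qed

lemma incl_ide:
  assumes t: "t \<in> T" and a: "a \<in> ob (Af t)"
  shows "fm incl (t, a) (t, a) (ide Decomp (t, a)) = ide AxG (t, a)"
proof
  have tZ: "t \<in> Z" using t T_sub by auto
  have one: "\<one> \<in> stab t" by (rule subgroup.one_closed[OF group_action.stabilizer_subgroup[OF action tZ]])
  fix k
  show "fm incl (t, a) (t, a) (ide Decomp (t, a)) k = ide AxG (t, a) k"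
  proof (cases "k \<in> stab t")
    case True
    then show ?thesis using homm_Acat_stab[OF tZ True a] stab_carrier[OF True]
      by (simp add: incl_fm coprod_ide cross_simps)
  next
    case False
    then have "k \<noteq> \<one>" using one by auto
    then show ?thesis using False by (simp add: incl_fm coprod_ide cross_simps)
  qed
qed


lemma incl_add:
  assumes t: "t \<in> T" "t' \<in> T" and a: "a \<in> ob (Af t)" and b: "b \<in> ob (Af t')"
    and f: "f \<in> carrier (homm Decomp (t, a) (t', b))" and f': "f' \<in> carrier (homm Decomp (t, a) (t', b))"
  shows "fm incl (t, a) (t', b) (add (homm Decomp (t, a) (t', b)) f f') =
     add (cross_hom G (carrier G) Acat \<alpha> (t, a) (t', b)) (fm incl (t, a) (t', b) f) (fm incl (t, a) (t', b) f')"
proof (cases "t = t'")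
  case True
  have tZ: "t \<in> Z" using t T_sub by auto
  show ?thesis unfolding True[symmetric]
    apply (rule ext)
    subgoal for k
      using homm_Acat_stab[OF tZ _ a] homm_Acat_off_stab[OF _ _ tZ a] stab_carrier
      by (cases "k \<in> stab t"; cases "k \<in> carrier G")
         (simp_all add: incl_fm homm_Decomp_same cross_hom_simps(3) zmod_simps)
    done
next
  case False
  have tZ: "t \<in> Z" "t' \<in> Z" using t T_sub by auto
  have A: "(t, a) \<in> ob Acat" and B: "(t', b) \<in> ob Acat" using tZ a b by (auto simp: ob_Acat)
  have c: "add (homm Decomp (t, a) (t', b)) f f' \<in> carrier (homm Decomp (t, a) (t', b))"
    using False by (simp add: homm_Decomp_other zmod_simps)
  show ?thesis
    using hom_AxG_between_reps[OF t False a incl_hom_closed[OF t a b c]]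
      hom_AxG_between_reps[OF t False a cross_setting.cross_hom_add_closed[OF cross_setting_G A B
          incl_hom_closed[OF t a b f] incl_hom_closed[OF t a b f']]] by simp
qed

lemma incl_smult:
  assumes t: "t \<in> T" "t' \<in> T" and a: "a \<in> ob (Af t)" and b: "b \<in> ob (Af t')"
    and f: "f \<in> carrier (homm Decomp (t, a) (t', b))" and r: "r \<in> carrier R"
  shows "fm incl (t, a) (t', b) (smult (homm Decomp (t, a) (t', b)) r f) =
     smult (cross_hom G (carrier G) Acat \<alpha> (t, a) (t', b)) r (fm incl (t, a) (t', b) f)"
proof (cases "t = t'")
  case True
  have tZ: "t \<in> Z" using t T_sub by auto
  show ?thesis unfolding True[symmetric]
    apply (rule ext)
    subgoal for k
      using homm_Acat_stab[OF tZ _ a] homm_Acat_off_stab[OF _ _ tZ a] stab_carrier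
      by (cases "k \<in> stab t"; cases "k \<in> carrier G")
         (simp_all add: incl_fm homm_Decomp_same cross_hom_simps(4) zmod_simps)
    done
next
  case False
  have tZ: "t \<in> Z" "t' \<in> Z" using t T_sub by auto
  have A: "(t, a) \<in> ob Acat" and B: "(t', b) \<in> ob Acat" using tZ a b by (auto simp: ob_Acat)
  have c: "smult (homm Decomp (t, a) (t', b)) r f \<in> carrier (homm Decomp (t, a) (t', b))"
    using False by (simp add: homm_Decomp_other zmod_simps)
  show ?thesis
    using hom_AxG_between_reps[OF t False a incl_hom_closed[OF t a b c]]
      hom_AxG_between_reps[OF t False a cross_setting.cross_hom_smult_closed[OF cross_setting_G A B
          incl_hom_closed[OF t a b f] r]] by simp
qed

lemma supp_incl:
  assumes t: "t \<in> Z" and b: "b \<in> ob (Af t)"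
  shows "cross_supp (carrier G) Acat \<alpha> (t, b) (t, c) (fm incl (t, b) (t, c) g)
      = cross_supp (stab t) (Af t) (restr \<alpha> t) b c g"
proof (rule Set.set_eqI)
  fix x
  show "x \<in> cross_supp (carrier G) Acat \<alpha> (t, b) (t, c) (fm incl (t, b) (t, c) g) \<longleftrightarrow> x
      \<in> cross_supp (stab t) (Af t) (restr \<alpha> t) b c g"
    using homm_Acat_stab[OF t _ b] stab_carrier by (cases "x \<in> stab t") (simp_all add: cross_supp_def incl_fm)
qed

lemma term_incl:
  assumes t: "t \<in> Z" and a: "a \<in> ob (Af t)" and b: "b \<in> ob (Af t)" and k: "k \<in> stab t" and x: "x \<in> stab t"
  shows "cross_term G (Af t) (restr \<alpha> t) a b c g f k x =
    cross_term G Acat \<alpha> (t, a) (t, b) (t, c) (fm incl (t, b) (t, c) g) (fm incl (t, a) (t, b) f) k x"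
proof -
  have "inv x \<otimes> k \<in> stab t" by (rule cross_setting.H_inv_mult_closed[OF cross_setting_stab[OF t] x k])
  then show ?thesis
    using x k stab_carrier[OF x] stab_carrier[OF k] stab_carrier
    by (simp add: cross_term_def incl_fm act_stab_pair[OF t _ a] act_stab_pair[OF t _ b] coprod_cmp_eq restr_fm)
qed

lemma incl_cmp_same:
  assumes t: "t \<in> T" and a: "a \<in> ob (Af t)" and b: "b \<in> ob (Af t)" and c: "c \<in> ob (Af t)"
    and f: "f \<in> carrier (cross_hom G (stab t) (Af t) (restr \<alpha> t) a b)"
    and g: "g \<in> carrier (cross_hom G (stab t) (Af t) (restr \<alpha> t) b c)"
  shows "fm incl (t, a) (t, c) (cmp (cross G (stab t) (Af t) (restr \<alpha> t)) a b c g f) =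
     cmp AxG (t, a) (t, b) (t, c) (fm incl (t, b) (t, c) g) (fm incl (t, a) (t, b) f)"
proof
  fix k
  have tZ: "t \<in> Z" using t T_sub by auto
  have A: "(t, a) \<in> ob Acat" and B: "(t, b) \<in> ob Acat" and Cc: "(t, c)
      \<in> ob Acat" using tZ a b c by (auto simp: ob_Acat)
  have Jf: "fm incl (t, a) (t, b) f \<in> carrier (cross_hom G (carrier G) Acat \<alpha> (t, a) (t, b))"
    by (rule incl_hom_closed[OF t t a b]) (simp add: homm_Decomp_same f)
  have Jg: "fm incl (t, b) (t, c) g \<in> carrier (cross_hom G (carrier G) Acat \<alpha> (t, b) (t, c))"
    by (rule incl_hom_closed[OF t t b c]) (simp add: homm_Decomp_same g)
  consider "k \<in> stab t" | "k \<in> carrier G" "k \<notin> stab t" | "k \<notin> carrier G" using stab_carrier by blast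
  then show "fm incl (t, a) (t, c) (cmp (cross G (stab t) (Af t) (restr \<alpha> t)) a b c g f) k =
     cmp AxG (t, a) (t, b) (t, c) (fm incl (t, b) (t, c) g) (fm incl (t, a) (t, b) f) k"
  proof cases
    case 1
    note kG = stab_carrier[OF 1]
    have "fm incl (t, a) (t, c) (cmp (cross G (stab t) (Af t) (restr \<alpha> t)) a b c g f) k
        = finsum (homm (Af t) (fo (restr \<alpha> t k) a) c) (cross_term G (Af t) (restr \<alpha> t) a b c g f k)
            (cross_supp (stab t) (Af t) (restr \<alpha> t) b c g)"
      using 1 kG by (simp add: incl_fm cross_simps(3))
    also have "\<dots> = finsum (homm Acat (fo (\<alpha> k) (t, a)) (t, c))
        (cross_term G Acat \<alpha> (t, a) (t, b) (t, c) (fm incl (t, b) (t, c) g) (fm incl (t, a) (t, b) f) k)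
        (cross_supp (carrier G) Acat \<alpha> (t, b) (t, c) (fm incl (t, b) (t, c) g))"
      unfolding supp_incl[OF tZ b] homm_Acat_stab[OF tZ 1 a]
    proof (rule abelian_monoid.finsum_cong'[OF lincat_hom_abelian_monoid[OF lincat_Af[rule_format, OF tZ]
          restr_ob[OF kG tZ a, unfolded stab_mem[THEN iffD1, OF 1, THEN conjunct2]] c]])
      show "cross_term G Acat \<alpha> (t, a) (t, b) (t, c) (fm incl (t, b) (t, c) g) (fm incl (t, a) (t, b) f) k
          \<in> cross_supp (stab t) (Af t) (restr \<alpha> t) b c g \<rightarrow> carrier (homm (Af t) (fo (restr \<alpha> t k) a) c)"
        using cross_setting.term_closed[OF cross_setting_G A B Cc Jg Jf kG] stab_carrier
        unfolding homm_Acat_stab[OF tZ 1 a, symmetric] by (auto simp: cross_supp_def)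
    qed (simp_all add: cross_supp_def term_incl[OF tZ a b 1])
    also have "\<dots> = cmp AxG (t, a) (t, b) (t, c) (fm incl (t, b) (t, c) g) (fm incl (t, a) (t, b) f) k"
      by (rule cross_simps(3)[OF kG, symmetric])
    finally show ?thesis .
  next
    case 2
    have "cmp AxG (t, a) (t, b) (t, c) (fm incl (t, b) (t, c) g) (fm incl (t, a) (t, b) f) k
        \<in> carrier (homm Acat (fo (\<alpha> k) (t, a)) (t, c))"
      by (rule cross_setting.cross_hom_in[OF cross_setting_G cross_setting.cmp_closed[OF
          cross_setting_G A B Cc Jg Jf] 2(1)])
    then show ?thesis using 2 homm_Acat_off_stab[OF 2 tZ a] by (simp add: incl_fm zmod_simps)
  qed (simp add: incl_fm cross_simps(4))
qed

lemma incl_cmp_through_other: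
  assumes t: "t \<in> T" "t' \<in> T" "t' \<noteq> t" and a: "a \<in> ob (Af t)" and c: "c \<in> ob (Af t)"
  shows "fm incl (t, a) (t, c) (cmp Decomp (t, a) (t', b) (t, c) g f) =
     cmp AxG (t, a) (t', b) (t, c) (fm incl (t', b) (t, c) g) (fm incl (t, a) (t', b) f)"
proof
  fix k
  have tZ: "t \<in> Z" using t T_sub by auto
  have A: "(t, a) \<in> ob Acat" and C: "(t, c) \<in> ob Acat" using tZ a c by (simp_all add: ob_Acat)
  have empty: "cross_supp (carrier G) Acat \<alpha> (t', b) (t, c) (fm incl (t', b) (t, c) g) = {}"
    using t(3) by (auto simp: cross_supp_def incl_fm)
  have rhs: "cmp AxG (t, a) (t', b) (t, c) (fm incl (t', b) (t, c) g) (fm incl (t, a) (t', b) f) k =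
      zero (homm Acat (fo (\<alpha> k) (t, a)) (t, c))" if kG: "k \<in> carrier G"
    unfolding cross_simps(3)[OF kG] empty
    by (rule abelian_monoid.finsum_empty[OF lincat_hom_abelian_monoid[OF lincat_Acat act_ob_Acat[OF kG A] C]])
  consider "k \<in> stab t" | "k \<in> carrier G" "k \<notin> stab t" | "k \<notin> carrier G" using stab_carrier by blast
  then show "fm incl (t, a) (t, c) (cmp Decomp (t, a) (t', b) (t, c) g f) k =
      cmp AxG (t, a) (t', b) (t, c) (fm incl (t', b) (t, c) g) (fm incl (t, a) (t', b) f) k"
  proof cases
    case 1
    then show ?thesis using rhs stab_carrier[OF 1] homm_Acat_stab[OF tZ 1 a] t(3)
      by (simp add: incl_fm coprod_cmp_through_other cross_simps cross_hom_simps(2))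
  qed (use rhs t(3) in \<open>simp_all add: incl_fm coprod_cmp_through_other cross_simps(4)\<close>)
qed

lemma incl_cmp:
  assumes t: "t \<in> T" "t' \<in> T" "t'' \<in> T" and a: "a \<in> ob (Af t)" and b: "b \<in> ob (Af
      t')" and c: "c \<in> ob (Af t'')"
    and f: "f \<in> carrier (homm Decomp (t, a) (t', b))" and g: "g \<in> carrier (homm Decomp (t', b) (t'', c))"
  shows "fm incl (t, a) (t'', c) (cmp Decomp (t, a) (t', b) (t'', c) g f) =
     cmp AxG (t, a) (t', b) (t'', c) (fm incl (t', b) (t'', c) g) (fm incl (t, a) (t', b) f)"
proof -
  consider "t'' \<noteq> t" | "t'' = t" "t' = t" | "t'' = t" "t' \<noteq> t" by blast
  then show ?thesis
  proof cases
    case 1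
    have tZ: "t \<in> Z" "t' \<in> Z" "t'' \<in> Z" using t T_sub by auto
    have obs: "(t, a) \<in> ob Acat" "(t', b) \<in> ob Acat" "(t'', c) \<in> ob Acat" using tZ a b c by (auto simp: ob_Acat)
    have "cmp Decomp (t, a) (t', b) (t'', c) g f \<in> carrier (homm Decomp (t, a) (t'', c))"
      using t a b c by (intro lincat_cmp_closed[OF lincat_Decomp _ _ _ f g]) (simp_all add: ob_Decomp)
    then show ?thesis
      using hom_AxG_between_reps[OF t(1,3) 1[symmetric] a incl_hom_closed[OF t(1,3) a c]]
        hom_AxG_between_reps[OF t(1,3) 1[symmetric] a cross_setting.cmp_closed[OF cross_setting_G obs
          incl_hom_closed[OF t(2,3) b c g] incl_hom_closed[OF t(1,2) a b f]]]
      by simp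
  next
    case 2
    then show ?thesis
      using incl_cmp_same[OF t(1) a] b c f g by (simp add: coprod_cmp_eq homm_Decomp_same cross_simps)
  next
    case 3
    then show ?thesis using incl_cmp_through_other[OF t(1,2) 3(2) a] c by simp
  qed
qed

lemma lin_functor_incl: "lin_functor R Decomp AxG incl"
  unfolding lin_functor_def incl_fo coprod_ob cross_simps(1,2) split_paired_Ball_Sigma
  apply (intro conjI ballI)
  subgoal using T_sub by auto
  subgoal by (rule incl_hom_closed) (simp_all add: cross_simps coprod_ob)
  subgoal by (rule incl_cmp) (simp_all add: cross_simps coprod_ob)
  subgoal by (rule incl_ide) (simp_all add: cross_simps coprod_ob)
  subgoal by (rule incl_add) (simp_all add: cross_simps coprod_ob)
  subgoal by (rule incl_smult) (simp_all add: cross_simps coprod_ob)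
  done

lemma restrict_stab_closed:
  assumes t: "t \<in> Z" and a: "a \<in> ob (Af t)" and u: "u \<in> carrier (homm AxG (t, a) (t, b))"
  shows "restrict u (stab t) \<in> carrier (homm Decomp (t, a) (t, b))"
proof -
  have u': "u \<in> carrier (cross_hom G (carrier G) Acat \<alpha> (t, a) (t, b))" using u by (simp add: homm_AxG)
  have "restrict u (stab t) \<in> carrier (cross_hom G (stab t) (Af t) (restr \<alpha> t) a b)"
  proof (rule cross_setting.cross_homI[OF cross_setting_stab[OF t]])
    fix k assume k: "k \<in> stab t"
    show "restrict u (stab t) k \<in> carrier (homm (Af t) (fo (restr \<alpha> t k) a) b)"
      using cross_setting.cross_hom_in[OF cross_setting_G u' stab_carrier[OF k]] homm_Acat_stab[OF t k a] k by simp
  next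
    have "cross_supp (stab t) (Af t) (restr \<alpha> t) a b (restrict u (stab t))
        \<subseteq> cross_supp (carrier G) Acat \<alpha> (t, a) (t, b) u"
      using homm_Acat_stab[OF t _ a] by (auto simp: cross_supp_def stab_carrier)
    then show "finite (cross_supp (stab t) (Af t) (restr \<alpha> t) a b (restrict u (stab t)))"
      using cross_setting.finite_supp[OF cross_setting_G u'] finite_subset by blast
  qed simp
  then show ?thesis by (simp add: homm_Decomp_same)
qed

lemma incl_restrict_stab:
  assumes t: "t \<in> Z" and a: "a \<in> ob (Af t)" and u: "u \<in> carrier (homm AxG (t, a) (t, b))"
  shows "fm incl (t, a) (t, b) (restrict u (stab t)) = u"
proof
  have u': "u \<in> carrier (cross_hom G (carrier G) Acat \<alpha> (t, a) (t, b))" using u by (simp add: homm_AxG)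
  fix k
  consider "k \<in> stab t" | "k \<in> carrier G" "k \<notin> stab t" | "k \<notin> carrier G" using stab_carrier by blast
  then show "fm incl (t, a) (t, b) (restrict u (stab t)) k = u k"
  proof cases
    case 2
    have "u k \<in> carrier (homm Acat (fo (\<alpha> k) (t, a)) (t, b))" by (rule cross_setting.cross_hom_in[OF
        cross_setting_G u' 2(1)])
    then show ?thesis using homm_Acat_off_stab[OF 2 t a] 2 by (simp add: incl_fm zmod_simps)
  qed (simp_all add: incl_fm stab_carrier cross_setting.cross_hom_out[OF cross_setting_G u'])
qed

lemma incl_full:
  assumes X: "X \<in> ob Decomp" and Y: "Y \<in> ob Decomp"
    and u: "u \<in> carrier (homm AxG (fo incl X) (fo incl Y))"
  shows "\<exists>d\<in>carrier (homm Decomp X Y). fm incl X Y d = u"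
proof -
  obtain t a where X: "X = (t, a)" "t \<in> T" "a \<in> ob (Af t)" "t \<in> Z" using X by (rule ob_Decomp_cases)
  obtain t' b where Y: "Y = (t', b)" "t' \<in> T" "b \<in> ob (Af t')" "t' \<in> Z" using Y by (rule ob_Decomp_cases)
  have u': "u \<in> carrier (homm AxG (t, a) (t', b))" using u X Y by (simp add: incl_fo)
  show ?thesis
  proof (cases "t = t'")
    case True
    then show ?thesis
      using restrict_stab_closed[OF X(4,3)] incl_restrict_stab[OF X(4,3)] u' X(1) Y(1) by blast
  next
    case False
    have c: "undefined \<in> carrier (homm Decomp (t, a) (t', b))" using False
        by (simp add: homm_Decomp_other zmod_simps)
    have "fm incl (t, a) (t', b) undefined = u"
      using hom_AxG_between_reps[OF X(2) Y(2) False X(3) incl_hom_closed[OF X(2) Y(2) X(3) Y(3) c]]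
        hom_AxG_between_reps[OF X(2) Y(2) False X(3)] u' by (simp add: homm_AxG)
    then show ?thesis using c X(1) Y(1) by blast
  qed
qed

definition rep_obj :: "'z \<times> 'o \<Rightarrow> 'z \<times> 'o" where
  "rep_obj A = fo (\<alpha> (rep_elt (fst A))) A"

definition to_rep :: "'z \<times> 'o \<Rightarrow> 'g \<Rightarrow> 'm" where
  "to_rep A = cross_single (carrier G) Acat \<alpha> A (rep_obj A) (rep_elt (fst A)) (ide Acat (rep_obj A))"

definition from_rep :: "'z \<times> 'o \<Rightarrow> 'g \<Rightarrow> 'm" where
  "from_rep A = cross_single (carrier G) Acat \<alpha> (rep_obj A) A (inv (rep_elt (fst A))) (ide Acat A)"

lemma rep_elt_carrier_ob: "A \<in> ob Acat \<Longrightarrow> rep_elt (fst A) \<in> carrier G"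
  by (erule ob_Acat_cases) (simp add: rep_elt_carrier)

lemma rep_obj_Decomp:
  assumes "A \<in> ob AxG"
  shows "rep_obj A \<in> ob Decomp"
proof -
  obtain z a where A: "A = (z, a)" "z \<in> Z" "a \<in> ob (Af z)" using assms unfolding ob_AxG by (rule ob_Acat_cases)
  show ?thesis
    using restr_ob[OF rep_elt_carrier[OF A(2)] A(2,3)] A
    by (simp add: rep_obj_def act_pair rep_elt_carrier rep_elt_moves orbit_rep_in_T ob_Decomp)
qed

lemma rep_obj_Decomp_id: "X \<in> ob Decomp \<Longrightarrow> rep_obj X = X"
  by (erule ob_Decomp_cases) (simp add: rep_obj_def rep_elt_T act_one_ob ob_Acat)

lemma to_rep_Decomp: "X \<in> ob Decomp \<Longrightarrow> to_rep X = ide AxG X"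
  by (erule ob_Decomp_cases)
     (simp add: to_rep_def rep_obj_Decomp_id ob_Decomp rep_elt_T cross_setting.ide_eq_single[OF cross_setting_G])

lemma ob_iso_family_rep: "ob_iso_family R AxG rep_obj to_rep from_rep"
proof (rule ob_iso_family.intro[OF lincat_AxG])
  fix A assume "A \<in> ob AxG"
  then have A: "A \<in> ob Acat" and g: "rep_elt (fst A) \<in> carrier G" by (simp_all add: ob_AxG rep_elt_carrier_ob)
  have A': "rep_obj A \<in> ob Acat" unfolding rep_obj_def by (rule act_ob_Acat[OF g A])
  show "rep_obj A \<in> ob AxG" using A' by (simp add: ob_AxG)
  show "to_rep A \<in> carrier (homm AxG A (rep_obj A))"
    unfolding to_rep_def homm_AxG using A A' g
    by (intro cross_setting.single_closed[OF cross_setting_G]) (simp_all add: rep_obj_def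
        lincat_ide_closed[OF lincat_Acat])
  show "from_rep A \<in> carrier (homm AxG (rep_obj A) A)"
    unfolding from_rep_def homm_AxG using A A' g
    by (intro cross_setting.single_closed[OF cross_setting_G]) (simp_all add: rep_obj_def
        act_inv_act lincat_ide_closed[OF lincat_Acat])
  show "cmp AxG A (rep_obj A) A (from_rep A) (to_rep A) = ide AxG A"
    unfolding to_rep_def from_rep_def rep_obj_def by (rule cross_setting.cmp_single_inv[OF cross_setting_G A g])
  show "cmp AxG (rep_obj A) A (rep_obj A) (to_rep A) (from_rep A) = ide AxG (rep_obj A)"
    unfolding to_rep_def from_rep_def rep_obj_def by (rule cross_setting.cmp_single_inv'[OF cross_setting_G A g])
qed

end

theorem lemma4p5:
  fixes R :: "('r, 'x) ring_scheme"
    and G :: "('g, 'y) monoid_scheme"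
    and Z :: "'z set" and \<phi> :: "'g \<Rightarrow> 'z \<Rightarrow> 'z"
    and Af :: "'z \<Rightarrow> ('o, 'r, 'm) lincat"
    and \<alpha> :: "'g \<Rightarrow> ('z \<times> 'o, 'm, 'z \<times> 'o, 'm) lfunctor"
    and T :: "'z set"
  assumes "cring R"
    and "group G"
    and "group_action G Z \<phi>"
    and "\<forall>z\<in>Z. lincat R (Af z)"
    and "lincat_action R G (coprod Z Af) \<alpha>"
    and "\<forall>g\<in>carrier G. \<forall>z\<in>Z. (\<forall>a\<in>ob (Af z). fst (fo (\<alpha> g) (z, a)) = \<phi> g z)
                              \<and> lin_iso R (Af z) (Af (\<phi> g z)) (restr \<alpha> z g)"
    and "T \<subseteq> Z"
    and "\<forall>z\<in>Z. \<exists>!t. t \<in> T \<and> t \<in> orbit G \<phi> z"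
  shows "lincat_equiv R (cross G (carrier G) (coprod Z Af) \<alpha>)
           (coprod T (\<lambda>z. cross G (stabilizer G \<phi> z) (Af z) (restr \<alpha> z)))"
proof -
  interpret orbit_decomposition G R Z \<phi> Af \<alpha> T
    by (rule orbit_decomposition.intro[OF assms(2)], rule orbit_decomposition_axioms.intro) (fact assms)+
  interpret fully_faithful R AxG Decomp incl
    by (rule fully_faithful.intro[OF lincat_AxG lincat_Decomp lin_functor_incl incl_faithful incl_full])
  show ?thesis
    by (rule lincat_equivI[of rep_obj to_rep from_rep])
       (simp_all add: incl_fo rep_obj_Decomp ob_iso_family_rep rep_obj_Decomp_id to_rep_Decomp)
qed

end
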